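(* For every $n\in\{1,\dots,N\}$: (i) $Y_n\ge L_n$ almost surely, so $F_{Y_n}(y)\le F_{L_n}(y)$ for all $y\ge 0$; (ii) as $y\to 0^+$, $$F_{L_n}(y)\sim \frac{N!}{(N-n)!(n-1)!}\sum_{i=0}^{N-n}\binom{N-n}{i}\frac{(-1)^i}{n+i}\,\xi_1^{\,n+i}\,y^{2m_sK(n+i)};$$ (iii) in the continuous-phase case, as $y\to0^+$, $$F_{Y_{c,n}}(y)\sim \frac{N!}{(N-n)!(n-1)!}\sum_{i=0}^{N-n}\binom{N-n}{i}\frac{(-1)^i}{n+i}\,\xi_2^{\,n+i}\,y^{2m_sK(n+i)}.$$ Here $F_X$ denotes the CDF of $X$ and $f\sim g$ means $f/g\to1$.
   Context: Fix integers $N\ge1$, $K\ge1$, $b\ge2$ and a real $\beta\in(0,1]$. Let $m_G,m_g\ge 1/2$ with $m_G\neq m_g$; put $m_s=\min\{m_G,m_g\}$, $m_l=\max\{m_G,m_g\}$. For $n=1,\dots,N$ and $k=1,\dots,K$ let $G_k^n,g_k^n$ be mutually independent complex random variables such that $|G_k^n|$ has the Nakagami density $f(x)=\frac{2m^m}{\Gamma(m)}x^{2m-1}e^{-mx^2}$ ($x\ge0$) with $m=m_G$, and $|g_k^n|$ has this density with $m=m_g$. Let $\Delta=2\pi/2^b$. For each $n$ fix a constant $\tilde\theta_n\in[0,2\pi)$ and set $\bar\theta_k^n=\tilde\theta_n-\arg(G_k^ng_k^n)$, $\hat\theta_k^n=\Delta(\lfloor\bar\theta_k^n/\Delta\rfloor+\tfrac12)$,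 $\epsilon_k^n=\hat\theta_k^n-\bar\theta_k^n$ (so $|\epsilon_k^n|\le \pi/2^b$). Define the discrete-phase gain $Y^{(n)}=\beta\big|\sum_{k=1}^K|G_k^n||g_k^n|e^{j\epsilon_k^n}\big|$ ($j=\sqrt{-1}$) and the continuous-phase gain $Y_c^{(n)}=\beta\sum_{k=1}^K|G_k^n||g_k^n|$. Let $Y_1\le\dots\le Y_N$ be the order statistics of $Y^{(1)},\dots,Y^{(N)}$ and $Y_{c,1}\le\dots\le Y_{c,N}$ those of $Y_c^{(1)},\dots,Y_c^{(N)}$. Let $a=\beta\cos(\pi/2^b)$ and let $L_1\le\dots\le L_N$ be the order statistics of $a\sum_{k=1}^K|G_k^n||g_k^n|$, $n=1,\dots,N$. Define $\varphi=\frac{\sqrt\pi\,4^{m_s-m_l+1}(m_sm_l)^{m_s}\Gamma(2m_s)\Gamma(2m_l-2m_s)}{\Gamma(m_s)\Gamma(m_l)\Gamma(m_l-m_s+\frac12)}$, $\zeta_1=\frac{\varphi^K}{2m_sK\,\Gamma(2m_sK)}$, $\xi_1=\zeta_1/a^{2m_sK}$, $\xi_2=\zeta_1/\beta^{2m_sK}$. *)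

theory Defs
  imports "HOL-Probability.Probability" "HOL-Library.Landau_Symbols"
begin

definition nakagami_pdf :: "real \<Rightarrow> real \<Rightarrow> real" where
  "nakagami_pdf m x = (if 0 \<le> x then 2 * m powr m / Gamma m * x powr (2*m - 1) * exp (- m * x\<^sup>2) else 0)"

definition cdf_of :: "'a measure \<Rightarrow> ('a \<Rightarrow> real) \<Rightarrow> real \<Rightarrow> real" where
  "cdf_of M X y = measure M {\<omega> \<in> space M. X \<omega> \<le> y}"

definition ord_stat :: "nat \<Rightarrow> (nat \<Rightarrow> 'a \<Rightarrow> real) \<Rightarrow> nat \<Rightarrow> 'a \<Rightarrow> real" where
  "ord_stat N X n \<omega> = sort (map (\<lambda>i. X i \<omega>) [1..<N+1]) ! (n - 1)"

definition qstep :: "nat \<Rightarrow> real" where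
  "qstep b = 2 * pi / 2 ^ b"

definition phase_bar :: "(nat \<Rightarrow> real) \<Rightarrow> (nat \<Rightarrow> nat \<Rightarrow> 'a \<Rightarrow> complex) \<Rightarrow> (nat \<Rightarrow> nat \<Rightarrow> 'a \<Rightarrow> complex)
    \<Rightarrow> nat \<Rightarrow> nat \<Rightarrow> 'a \<Rightarrow> real" where
  "phase_bar th G g k n \<omega> = th n - Arg (G k n \<omega> * g k n \<omega>)"

definition phase_hat :: "nat \<Rightarrow> (nat \<Rightarrow> real) \<Rightarrow> (nat \<Rightarrow> nat \<Rightarrow> 'a \<Rightarrow> complex) \<Rightarrow> (nat \<Rightarrow> nat \<Rightarrow> 'a \<Rightarrow> complex)
    \<Rightarrow> nat \<Rightarrow> nat \<Rightarrow> 'a \<Rightarrow> real" where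
  "phase_hat b th G g k n \<omega> =
     qstep b * (of_int \<lfloor>phase_bar th G g k n \<omega> / qstep b\<rfloor> + 1/2)"

definition phase_err :: "nat \<Rightarrow> (nat \<Rightarrow> real) \<Rightarrow> (nat \<Rightarrow> nat \<Rightarrow> 'a \<Rightarrow> complex) \<Rightarrow> (nat \<Rightarrow> nat \<Rightarrow> 'a \<Rightarrow> complex)
    \<Rightarrow> nat \<Rightarrow> nat \<Rightarrow> 'a \<Rightarrow> real" where
  "phase_err b th G g k n \<omega> = phase_hat b th G g k n \<omega> - phase_bar th G g k n \<omega>"

definition Y_disc :: "nat \<Rightarrow> nat \<Rightarrow> real \<Rightarrow> (nat \<Rightarrow> real) \<Rightarrow> (nat \<Rightarrow> nat \<Rightarrow> 'a \<Rightarrow> complex)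
    \<Rightarrow> (nat \<Rightarrow> nat \<Rightarrow> 'a \<Rightarrow> complex) \<Rightarrow> nat \<Rightarrow> 'a \<Rightarrow> real" where
  "Y_disc K b \<beta> th G g n \<omega> = \<beta> * cmod (\<Sum>k=1..K. complex_of_real (cmod (G k n \<omega>) * cmod (g k n \<omega>))
        * cis (phase_err b th G g k n \<omega>))"

definition Y_cont :: "nat \<Rightarrow> real \<Rightarrow> (nat \<Rightarrow> nat \<Rightarrow> 'a \<Rightarrow> complex)
    \<Rightarrow> (nat \<Rightarrow> nat \<Rightarrow> 'a \<Rightarrow> complex) \<Rightarrow> nat \<Rightarrow> 'a \<Rightarrow> real" where
  "Y_cont K \<beta> G g n \<omega> = \<beta> * (\<Sum>k=1..K. cmod (G k n \<omega>) * cmod (g k n \<omega>))"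

definition L_low :: "nat \<Rightarrow> nat \<Rightarrow> real \<Rightarrow> (nat \<Rightarrow> nat \<Rightarrow> 'a \<Rightarrow> complex)
    \<Rightarrow> (nat \<Rightarrow> nat \<Rightarrow> 'a \<Rightarrow> complex) \<Rightarrow> nat \<Rightarrow> 'a \<Rightarrow> real" where
  "L_low K b \<beta> G g n \<omega> = \<beta> * cos (pi / 2 ^ b) * (\<Sum>k=1..K. cmod (G k n \<omega>) * cmod (g k n \<omega>))"

definition phi_const :: "real \<Rightarrow> real \<Rightarrow> real" where
  "phi_const ms ml = sqrt pi * 4 powr (ms - ml + 1) * (ms * ml) powr ms * Gamma (2*ms) * Gamma (2*ml - 2*ms)
      / (Gamma ms * Gamma ml * Gamma (ml - ms + 1/2))"

definition zeta1 :: "nat \<Rightarrow> real \<Rightarrow> real \<Rightarrow> real" where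
  "zeta1 K ms ml = phi_const ms ml ^ K / (2 * ms * real K * Gamma (2 * ms * real K))"

definition asym_cdf :: "nat \<Rightarrow> nat \<Rightarrow> nat \<Rightarrow> real \<Rightarrow> real \<Rightarrow> real \<Rightarrow> real" where
  "asym_cdf N n K ms \<xi> y = fact N / (fact (N - n) * fact (n - 1)) *
     (\<Sum>i=0..N-n. real (N - n choose i) * (-1) ^ i / real (n + i) * \<xi> ^ (n + i)
        * y powr (2 * ms * real K * real (n + i)))"

end

(*
  Part (i) is pointwise: every quantisation error has modulus at most pi/2^b, so the real part of
  the phased sum, and hence its modulus, dominates cos(pi/2^b) times the sum of the amplitudes, and
  order statistics are monotone.

  For (ii) and (iii) everything reduces to the behaviour near 0 of the cdf of the gain
  S = sum_k |G_k||g_k|, scaled by a positive constant. A Nakagami-m cdf is squeezed between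
  A u^(2m) - B u^(2m+eta) and A u^(2m). Conditioning on the factor with the larger parameter turns
  such a two-sided power bound for one factor into one for the product, with exponent 2 m_s and
  coefficient A E[Y^(-2 m_s)] = phi / Gamma(2 m_s + 1) (Legendre duplication). Along independent
  sums the exponents add and the coefficients multiply with a Beta-function weight, which yields
  F_S(u) ~ zeta_1 u^(2 m_s K). Finally, the n-th order statistic of N independent gains is at most y
  exactly when at least n of them are; this Poisson-binomial tail is asymptotic to
  binom(N, n) F_S(y)^n, which is also the leading term of the stated finite sum.
*)

theory Submission
  imports Defs
begin

section \<open>Beta and Gamma function identities\<close>

lemma has_integral_reflected_powr:
  fixes a y t :: real
  assumes "a \<ge> 1" "t \<le> y"
  shows "((\<lambda>s. a * (y - s) powr (a - 1)) has_integral (y - t) powr a) {t..y}"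
proof -
  have "((\<lambda>x. x powr (a-1)) has_integral ((y-t) powr a / a)) (cbox 0 (y-t))"
    using has_integral_powr_from_0[of "a-1" "y-t"] assms by simp
  from has_integral_affinity[OF this, of "-1" y]
  have "((\<lambda>x. (y - x) powr (a-1)) has_integral ((y-t) powr a / a)) ((\<lambda>x. y - x) ` {0..y-t})"
    by simp
  moreover have "(\<lambda>x. y - x) ` {0..y-t} = {t..y}"
    by (auto simp: image_iff intro!: bexI[of _ "y - x" for x])
  ultimately have "((\<lambda>x. (y - x) powr (a-1)) has_integral ((y-t) powr a / a)) {t..y}"
    by simp
  from has_integral_mult_right[OF this, of a] show ?thesis
    using assms by simp
qed

lemma has_integral_Beta_kernel:
  fixes a b y :: real
  assumes "a \<ge> 1" "b > 0" "y \<ge> 0"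
  shows "((\<lambda>s. a * (y - s) powr (a - 1) * s powr b) has_integral
            (Gamma (a+1) * Gamma (b+1) / Gamma (a+b+1) * y powr (a+b))) {0..y}"
proof (cases "y = 0")
  case True
  then show ?thesis
    using has_integral_refl(2)[of "\<lambda>s. a * (y - s) powr (a - 1) * s powr b" 0] by simp
next
  case False
  with assms have y: "y > 0" by simp
  have "((\<lambda>x. x powr b * (1 - x) powr (a - 1)) has_integral Beta (b+1) a) (cbox 0 1)"
    using has_integral_Beta_real[of "b+1" a] assms by simp
  from has_integral_affinity'[OF this, of "1/y" 0]
  have "((\<lambda>s. (s/y) powr b * (1 - s/y) powr (a - 1)) has_integral (Beta (b+1) a * y)) {0..y}"
    using y by (simp add: mult.commute)
  from has_integral_mult_right[OF this, of "a * y powr (a+b-1)"]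
  have int: "((\<lambda>s. (a * y powr (a+b-1)) * ((s/y) powr b * (1 - s/y) powr (a - 1))) has_integral
          (a * Beta (b+1) a) * (y powr (a+b-1) * y)) {0..y}"
    by (simp only: ac_simps)
  have eq: "(a * y powr (a+b-1)) * ((s/y) powr b * (1 - s/y) powr (a - 1))
      = a * (y - s) powr (a - 1) * s powr b" if "s \<in> {0..y}" for s
  proof -
    have "1 - s/y = (y - s)/y" using y by (simp add: field_simps)
    then have "(s/y) powr b * (1 - s/y) powr (a - 1) = s powr b * (y-s) powr (a-1) / (y powr b * y powr (a-1))"
      using that y by (simp add: powr_divide)
    also have "y powr b * y powr (a-1) = y powr (a+b-1)"
      by (simp add: powr_add[symmetric] algebra_simps)
    finally show ?thesis using y by simp
  qed
  have "a * Beta (b+1) a = Gamma (a+1) * Gamma (b+1) / Gamma (a+b+1)"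
  proof -
    have "a \<notin> \<int>\<^sub>\<le>\<^sub>0" using assms by (auto elim!: nonpos_Ints_cases)
    then show ?thesis using Gamma_plus1[of a] by (simp add: Beta_def add_ac)
  qed
  moreover have "y powr (a+b-1) * y = y powr (a+b)"
    using y by (simp add: powr_diff)
  ultimately show ?thesis
    using has_integral_eq[OF eq int] by simp
qed

lemma Gamma_legendre_duplication_real:
  fixes x :: real
  assumes "x > 0"
  shows "Gamma x * Gamma (x + 1/2) = 2 powr (1 - 2*x) * sqrt pi * Gamma (2*x)"
proof -
  have pos: "complex_of_real t \<notin> \<int>\<^sub>\<le>\<^sub>0" if "t > 0" for t
    using that by (auto simp: of_real_in_nonpos_Ints_iff elim!: nonpos_Ints_cases)
  have "complex_of_real (Gamma x * Gamma (x + 1/2))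
      = Gamma (complex_of_real x) * Gamma (complex_of_real x + 1/2)"
    by (simp flip: Gamma_complex_of_real)
  also have "\<dots> = exp ((1 - 2 * complex_of_real x) * of_real (ln 2)) * of_real (sqrt pi) * Gamma (2 * complex_of_real x)"
    using pos[of x] pos[of "x + 1/2"] assms by (intro Gamma_legendre_duplication) simp_all
  also have "exp ((1 - 2 * complex_of_real x) * of_real (ln 2)) = complex_of_real (2 powr (1 - 2*x))"
    by (simp add: powr_def mult.commute flip: exp_of_real)
  also have "Gamma (2 * complex_of_real x) = complex_of_real (Gamma (2*x))"
    by (simp flip: Gamma_complex_of_real)
  also have "complex_of_real (2 powr (1 - 2*x)) * of_real (sqrt pi) * complex_of_real (Gamma (2*x))
      = complex_of_real (2 powr (1 - 2*x) * sqrt pi * Gamma (2*x))"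
    by simp
  finally show ?thesis by (simp only: of_real_eq_iff)
qed

lemma phi_const_eq:
  assumes "ms > 0" "ms < ml"
  shows "phi_const ms ml
       = ms powr (ms-1) / Gamma ms * (ml powr ms * Gamma (ml - ms) / Gamma ml) * Gamma (2*ms+1)"
proof -
  define x where "x = ml - ms"
  have x: "x > 0" and ml: "ml > 0" unfolding x_def using assms by simp_all
  have Gx: "Gamma (x + 1/2) > 0" "Gamma x > 0" "Gamma ms > 0" "Gamma ml > 0" "Gamma (2*ms) > 0"
    using x assms ml by (auto intro!: Gamma_real_pos)
  have dup: "Gamma (2*x) = Gamma x * Gamma (x + 1/2) / (2 powr (1 - 2*x) * sqrt pi)"
    using Gamma_legendre_duplication_real[OF x] by (simp add: field_simps)
  have four: "4 powr (ms - ml + 1) = 2 powr (2 - 2*x)"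
  proof -
    have "(4::real) powr (ms - ml + 1) = (2 powr 2) powr (ms - ml + 1)" by simp
    also have "\<dots> = 2 powr (2 - 2*x)" unfolding powr_powr x_def by (simp add: algebra_simps)
    finally show ?thesis .
  qed
  have two: "2 powr (2 - 2*x) / 2 powr (1 - 2*x) = (2::real)"
    by (simp add: powr_diff[symmetric])
  have "2*ms \<notin> \<int>\<^sub>\<le>\<^sub>0" using assms by auto
  then have G2: "Gamma (2*ms+1) = 2*ms * Gamma (2*ms)" by (simp add: Gamma_plus1)
  have "phi_const ms ml = sqrt pi * 2 powr (2 - 2*x) * (ms * ml) powr ms * Gamma (2*ms) * Gamma (2*x)
      / (Gamma ms * Gamma ml * Gamma (x + 1/2))"
    unfolding phi_const_def four unfolding x_def by (simp add: algebra_simps)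
  also have "\<dots> = (2 powr (2 - 2*x) / 2 powr (1 - 2*x)) * (ms * ml) powr ms * Gamma (2*ms) * Gamma x
      / (Gamma ms * Gamma ml)"
    unfolding dup using Gx by (simp add: field_simps)
  also have "\<dots> = 2 * (ms powr ms * ml powr ms) * Gamma (2*ms) * Gamma x / (Gamma ms * Gamma ml)"
    unfolding two using assms ml by (simp add: powr_mult)
  also have "\<dots> = ms powr (ms-1) / Gamma ms * (ml powr ms * Gamma (ml - ms) / Gamma ml) * Gamma (2*ms+1)"
  proof -
    have "ms powr ms = ms powr (ms - 1) * ms" using assms by (simp add: powr_diff)
    then show ?thesis unfolding G2 x_def using Gx by (simp add: field_simps)
  qed
  finally show ?thesis .
qed

lemma zeta1_eq:
  assumes "ms > 0" "K \<ge> 1"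
  shows "zeta1 K ms ml = phi_const ms ml ^ K / Gamma (2 * ms * real K + 1)"
proof -
  have "2 * ms * real K > 0" using assms by simp
  then have "2 * ms * real K \<notin> \<int>\<^sub>\<le>\<^sub>0" by (auto dest: nonpos_Ints_nonpos)
  then have "Gamma (2 * ms * real K + 1) = 2 * ms * real K * Gamma (2 * ms * real K)"
    by (simp add: Gamma_plus1)
  then show ?thesis unfolding zeta1_def by simp
qed

lemma phi_const_pos:
  assumes "ms > 0" "ms < ml"
  shows "phi_const ms ml > 0"
  unfolding phi_const_eq[OF assms] using assms by simp

lemma zeta1_pos:
  assumes "ms > 0" "ms < ml" "K \<ge> 1"
  shows "zeta1 K ms ml > 0"
proof -
  have "2 * ms * real K + 1 > 0" using assms by (simp add: add_pos_nonneg)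
  then show ?thesis
    unfolding zeta1_eq[OF assms(1,3)] using phi_const_pos[OF assms(1,2)]
    by (intro divide_pos_pos zero_less_power Gamma_real_pos)
qed

section \<open>Power asymptotics at zero\<close>

lemma tendsto_powr_at_right_0: "(\<eta>::real) > 0 \<Longrightarrow> ((\<lambda>u. u powr \<eta>) \<longlongrightarrow> 0) (at_right 0)"
  by (intro tendsto_zero_powrI tendsto_ident_at tendsto_const)
     (auto simp: eventually_at_right_less eventually_mono[OF eventually_at_right_less])

lemma tendsto_powr_nonneg_at_right_0:
  fixes \<eta> :: real
  assumes "\<eta> \<ge> 0"
  shows "((\<lambda>u. u powr \<eta>) \<longlongrightarrow> (if \<eta> = 0 then 1 else 0)) (at_right 0)"
proof (cases "\<eta> = 0")
  case True
  have "\<forall>\<^sub>F y in at_right 0. 1 = y powr \<eta>"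
    using eventually_at_right_less by eventually_elim (use True in simp)
  then show ?thesis using True by (simp add: Lim_transform_eventually[OF tendsto_const])
next
  case False
  then show ?thesis using tendsto_powr_at_right_0[of \<eta>] assms by simp
qed

lemma tendsto_zero_of_asymp_equiv_powr:
  fixes P :: "real \<Rightarrow> real"
  assumes "P \<sim>[at_right 0] (\<lambda>y. \<xi> * y powr \<alpha>)" and "\<alpha> > 0"
  shows "(P \<longlongrightarrow> 0) (at_right 0)"
proof -
  have "((\<lambda>y. \<xi> * y powr \<alpha>) \<longlongrightarrow> \<xi> * 0) (at_right 0)"
    by (intro tendsto_intros tendsto_powr_at_right_0 assms)
  then show ?thesis
    using asymp_equiv_tendsto_transfer[OF asymp_equiv_symI[OF assms(1)]] by simp
qed

lemma tendsto_div_powr_of_asymp_equiv: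
  fixes P :: "real \<Rightarrow> real"
  assumes "P \<sim>[at_right 0] (\<lambda>y. \<xi> * y powr \<alpha>)"
  shows "((\<lambda>y. P y / y powr \<alpha>) \<longlongrightarrow> \<xi>) (at_right 0)"
proof -
  have "(\<lambda>y. P y / y powr \<alpha>) \<sim>[at_right 0] (\<lambda>y. \<xi> * y powr \<alpha> / y powr \<alpha>)"
    by (rule asymp_equiv_divide[OF assms asymp_equiv_refl])
  moreover have "((\<lambda>y. \<xi> * y powr \<alpha> / y powr \<alpha>) \<longlongrightarrow> \<xi>) (at_right 0)"
  proof (rule Lim_transform_eventually[OF tendsto_const])
    show "\<forall>\<^sub>F y in at_right 0. \<xi> = \<xi> * y powr \<alpha> / y powr \<alpha>"
      using eventually_at_right_less by eventually_elim simp
  qed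
  ultimately show ?thesis
    using asymp_equiv_tendsto_transfer asymp_equiv_symI by blast
qed

lemma asymp_equiv_at_right_0_of_tendsto_div_powr:
  fixes f :: "real \<Rightarrow> real"
  assumes "((\<lambda>y. f y / y powr \<alpha>) \<longlongrightarrow> C) (at_right 0)" and "C \<noteq> 0"
  shows "f \<sim>[at_right 0] (\<lambda>y. C * y powr \<alpha>)"
proof -
  have "\<forall>\<^sub>F y in at_right 0. f y = f y / y powr \<alpha> * y powr \<alpha>"
    using eventually_at_right_less by eventually_elim simp
  then have "f \<sim>[at_right 0] (\<lambda>y. f y / y powr \<alpha> * y powr \<alpha>)"
    by (rule asymp_equiv_refl_ev)
  also have "(\<lambda>y. f y / y powr \<alpha> * y powr \<alpha>) \<sim>[at_right 0] (\<lambda>y. C * y powr \<alpha>)"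
    using asymp_equiv_mult[OF tendsto_imp_asymp_equiv_const[OF assms] asymp_equiv_refl] .
  finally show ?thesis .
qed

lemma asymp_equiv_powr_compose_divide:
  fixes F :: "real \<Rightarrow> real"
  assumes F: "F \<sim>[at_right 0] (\<lambda>u. c * u powr \<alpha>)" and d: "d > 0"
  shows "(\<lambda>y. F (y / d)) \<sim>[at_right 0] (\<lambda>y. (c / d powr \<alpha>) * y powr \<alpha>)"
proof -
  have "filterlim (\<lambda>y. y / d) (at_right 0) (at_right 0)"
    unfolding filterlim_at
  proof
    show "\<forall>\<^sub>F y in at_right 0. y / d \<in> {0<..} \<and> y / d \<noteq> 0"
      using eventually_at_right_less by eventually_elim (use d in auto)
    have "((\<lambda>y. y / d) \<longlongrightarrow> 0 / d) (at_right 0)" using d by (intro tendsto_intros) auto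
    then show "((\<lambda>y. y / d) \<longlongrightarrow> 0) (at_right 0)" by simp
  qed
  from asymp_equiv_compose'[OF F this]
  have "(\<lambda>y. F (y / d)) \<sim>[at_right 0] (\<lambda>y. c * (y / d) powr \<alpha>)" by simp
  also have "(\<lambda>y. c * (y / d) powr \<alpha>) \<sim>[at_right 0] (\<lambda>y. (c / d powr \<alpha>) * y powr \<alpha>)"
  proof (rule asymp_equiv_refl_ev)
    show "\<forall>\<^sub>F y in at_right 0. c * (y / d) powr \<alpha> = c / d powr \<alpha> * y powr \<alpha>"
      using eventually_at_right_less by eventually_elim (use d in \<open>simp add: powr_divide\<close>)
  qed
  finally show ?thesis .
qed

lemma asym_cdf_asymp_equiv:
  assumes n: "1 \<le> n" "n \<le> N" and \<alpha>: "2 * ms * real K > 0" and \<xi>: "\<xi> > 0"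
  shows "asym_cdf N n K ms \<xi> \<sim>[at_right 0] (\<lambda>y. real (N choose n) * \<xi> ^ n * y powr (2 * ms * real K * real n))"
proof -
  define \<alpha> where "\<alpha> = 2 * ms * real K"
  define c0 where "c0 = fact N / (fact (N - n) * fact (n - 1) :: real)"
  define coef where "coef i = real (N - n choose i) * (-1) ^ i / real (n + i) * \<xi> ^ (n + i)" for i
  have c0: "c0 / real n = real (N choose n)"
  proof -
    have "(fact n * fact (N - n) * (N choose n) :: nat) = fact N"
      by (rule binomial_fact_lemma) (use n in simp)
    then have fN: "fact N = real (N choose n) * (fact n * fact (N - n))"
      by (metis of_nat_fact of_nat_mult mult.commute)
    have "fact n = real n * (fact (n - 1) :: real)" using n by (simp add: fact_reduce)
    then show ?thesis unfolding c0_def fN using n by (simp add: mult_ac)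
  qed
  have "((\<lambda>y. c0 * (\<Sum>i=0..N-n. coef i * y powr (\<alpha> * real i))) \<longlongrightarrow>
      c0 * (\<Sum>i=0..N-n. coef i * (if \<alpha> * real i = 0 then 1 else 0))) (at_right 0)"
    using \<alpha> by (intro tendsto_mult tendsto_const tendsto_sum tendsto_powr_nonneg_at_right_0) (simp add: \<alpha>_def)
  moreover have "c0 * (\<Sum>i=0..N-n. coef i * (if \<alpha> * real i = 0 then 1 else 0)) = real (N choose n) * \<xi> ^ n"
  proof -
    have "\<alpha> * real i = 0 \<longleftrightarrow> i = 0" for i using \<alpha> by (auto simp: \<alpha>_def)
    then have "(\<Sum>i=0..N-n. coef i * (if \<alpha> * real i = 0 then 1 else 0)) = coef 0"
      by (simp add: if_distrib[of "(*) _"] cong: if_cong)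
    then show ?thesis using c0 n by (simp add: coef_def field_simps)
  qed
  moreover have "\<forall>\<^sub>F y in at_right 0. asym_cdf N n K ms \<xi> y / y powr (\<alpha> * real n)
      = c0 * (\<Sum>i=0..N-n. coef i * y powr (\<alpha> * real i))"
    using eventually_at_right_less
  proof eventually_elim
    case (elim y)
    have pw: "y powr (\<alpha> * real (n + i)) = y powr (\<alpha> * real i) * y powr (\<alpha> * real n)" for i
      by (simp add: distrib_left powr_add mult.commute)
    have "asym_cdf N n K ms \<xi> y = c0 * (\<Sum>i=0..N-n. coef i * y powr (\<alpha> * real (n + i)))"
      unfolding asym_cdf_def c0_def coef_def \<alpha>_def ..
    also have "\<dots> = c0 * (\<Sum>i=0..N-n. coef i * y powr (\<alpha> * real i)) * y powr (\<alpha> * real n)"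
      by (simp only: pw mult.assoc sum_distrib_right)
    finally show ?case using elim by simp
  qed
  ultimately have "((\<lambda>y. asym_cdf N n K ms \<xi> y / y powr (\<alpha> * real n)) \<longlongrightarrow> real (N choose n) * \<xi> ^ n) (at_right 0)"
    by (simp add: tendsto_cong)
  from asymp_equiv_at_right_0_of_tendsto_div_powr[OF this] show ?thesis
    using n \<xi> by (simp add: \<alpha>_def)
qed

lemma tendsto_prod_div_powr_of_asymp_equiv:
  fixes P :: "nat \<Rightarrow> real \<Rightarrow> real"
  assumes S: "finite S" and P: "\<And>j. j \<in> S \<Longrightarrow> P j \<sim>[at_right 0] (\<lambda>y. \<xi> * y powr \<alpha>)"
  shows "((\<lambda>y. (\<Prod>j\<in>S. P j y) / y powr (\<alpha> * real (card S))) \<longlongrightarrow> \<xi> ^ card S) (at_right 0)"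
proof -
  have "((\<lambda>y. \<Prod>j\<in>S. P j y / y powr \<alpha>) \<longlongrightarrow> (\<Prod>j\<in>S. \<xi>)) (at_right 0)"
    by (intro tendsto_prod tendsto_div_powr_of_asymp_equiv P)
  moreover have "\<forall>\<^sub>F y in at_right 0. (\<Prod>j\<in>S. P j y / y powr \<alpha>) = (\<Prod>j\<in>S. P j y) / y powr (\<alpha> * real (card S))"
    using eventually_at_right_less
    by eventually_elim (simp add: prod_dividef powr_realpow[symmetric] powr_powr)
  ultimately show ?thesis
    using S by (simp add: tendsto_cong)
qed

lemma tendsto_subset_term_div_powr:
  fixes P :: "nat \<Rightarrow> real \<Rightarrow> real"
  assumes I: "finite I" and S: "S \<subseteq> I" "n \<le> card S" and \<alpha>: "\<alpha> > 0"
    and P: "\<And>j. j \<in> I \<Longrightarrow> P j \<sim>[at_right 0] (\<lambda>y. \<xi> * y powr \<alpha>)"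
  shows "((\<lambda>y. (\<Prod>j\<in>S. P j y) * (\<Prod>j\<in>I - S. 1 - P j y) / y powr (\<alpha> * real n))
          \<longlongrightarrow> (if card S = n then \<xi> ^ n else 0)) (at_right 0)"
proof -
  have fin: "finite S" using I S finite_subset by blast
  have lim_pow: "((\<lambda>y. y powr (\<alpha> * (real (card S) - real n)))
      \<longlongrightarrow> (if \<alpha> * (real (card S) - real n) = 0 then 1 else 0)) (at_right 0)"
    using \<alpha> S(2) by (intro tendsto_powr_nonneg_at_right_0) simp
  have Plim: "(P j \<longlongrightarrow> 0) (at_right 0)" if "j \<in> I" for j
    using tendsto_zero_of_asymp_equiv_powr[OF P[OF that] \<alpha>] .
  have "((\<lambda>y. (\<Prod>j\<in>S. P j y) / y powr (\<alpha> * real (card S)) * y powr (\<alpha> * (real (card S) - real n))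
        * (\<Prod>j\<in>I - S. 1 - P j y))
      \<longlongrightarrow> \<xi> ^ card S * (if \<alpha> * (real (card S) - real n) = 0 then 1 else 0) * (\<Prod>j\<in>I - S. 1 - 0)) (at_right 0)"
    using S by (intro tendsto_mult tendsto_prod tendsto_diff tendsto_const lim_pow
        tendsto_prod_div_powr_of_asymp_equiv[OF fin] Plim P) auto
  moreover have "\<forall>\<^sub>F y in at_right 0.
      (\<Prod>j\<in>S. P j y) / y powr (\<alpha> * real (card S)) * y powr (\<alpha> * (real (card S) - real n)) * (\<Prod>j\<in>I - S. 1 - P j y)
      = (\<Prod>j\<in>S. P j y) * (\<Prod>j\<in>I - S. 1 - P j y) / y powr (\<alpha> * real n)"
    using eventually_at_right_less
    by eventually_elim (simp add: powr_diff right_diff_distrib)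
  ultimately have "((\<lambda>y. (\<Prod>j\<in>S. P j y) * (\<Prod>j\<in>I - S. 1 - P j y) / y powr (\<alpha> * real n))
      \<longlongrightarrow> \<xi> ^ card S * (if \<alpha> * (real (card S) - real n) = 0 then 1 else 0) * (\<Prod>j\<in>I - S. 1 - 0)) (at_right 0)"
    by (rule Lim_transform_eventually)
  then show ?thesis
    using \<alpha> by (cases "card S = n") simp_all
qed

lemma poisson_binomial_tail_asymp_equiv:
  fixes P :: "nat \<Rightarrow> real \<Rightarrow> real"
  assumes I: "finite I" and n: "1 \<le> n" "n \<le> card I" and \<xi>: "\<xi> > 0" and \<alpha>: "\<alpha> > 0"
    and P: "\<And>j. j \<in> I \<Longrightarrow> P j \<sim>[at_right 0] (\<lambda>y. \<xi> * y powr \<alpha>)"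
  shows "(\<lambda>y. \<Sum>S\<in>{S. S \<subseteq> I \<and> n \<le> card S}. (\<Prod>j\<in>S. P j y) * (\<Prod>j\<in>I - S. 1 - P j y))
         \<sim>[at_right 0] (\<lambda>y. real (card I choose n) * \<xi> ^ n * y powr (\<alpha> * real n))"
proof -
  define \<S> where "\<S> = {S. S \<subseteq> I \<and> n \<le> card S}"
  have "((\<lambda>y. \<Sum>S\<in>\<S>. (\<Prod>j\<in>S. P j y) * (\<Prod>j\<in>I - S. 1 - P j y) / y powr (\<alpha> * real n))
        \<longlongrightarrow> (\<Sum>S\<in>\<S>. if card S = n then \<xi> ^ n else 0)) (at_right 0)"
    unfolding \<S>_def by (intro tendsto_sum tendsto_subset_term_div_powr I \<alpha> P) auto
  moreover have "(\<Sum>S\<in>\<S>. if card S = n then \<xi> ^ n else 0) = real (card I choose n) * \<xi> ^ n"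
  proof -
    have "{S \<in> \<S>. card S = n} = {S. S \<subseteq> I \<and> card S = n}" unfolding \<S>_def by auto
    moreover have "finite \<S>" unfolding \<S>_def using I by auto
    ultimately show ?thesis using I by (simp add: sum.If_cases Int_def conj_commute n_subsets)
  qed
  ultimately have "((\<lambda>y. (\<Sum>S\<in>\<S>. (\<Prod>j\<in>S. P j y) * (\<Prod>j\<in>I - S. 1 - P j y)) / y powr (\<alpha> * real n))
        \<longlongrightarrow> real (card I choose n) * \<xi> ^ n) (at_right 0)"
    by (simp add: sum_divide_distrib)
  then show ?thesis
    unfolding \<S>_def using n \<xi> by (intro asymp_equiv_at_right_0_of_tendsto_div_powr) auto
qed

section \<open>The Nakagami distribution\<close>

lemma nn_integral_indicator_powr:
  fixes C p u :: real
  assumes "C \<ge> 0" "p > -1" "u \<ge> 0"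
  shows "(\<integral>\<^sup>+x. ennreal (indicator {0..u} x * (C * x powr p)) \<partial>lborel) = ennreal (C * (u powr (p+1) / (p+1)))"
proof -
  have "((\<lambda>x. C * x powr p) has_integral (C * (u powr (p+1) / (p+1)))) {0..u}"
    using has_integral_powr_from_0[OF assms(2,3)] by (rule has_integral_mult_right)
  from nn_integral_has_integral_lebesgue[OF _ this] show ?thesis
    using assms by simp
qed

lemma one_minus_exp_neg_le_powr:
  fixes t \<theta> :: real
  assumes "t \<ge> 0" "0 < \<theta>" "\<theta> \<le> 1"
  shows "1 - exp (-t) \<le> t powr \<theta>"
proof (cases "t \<le> 1")
  case True
  have "1 - exp (-t) \<le> t" using exp_ge_add_one_self[of "-t"] by simp
  also have "t \<le> t powr \<theta>"
    using True assms powr_mono'[of \<theta> 1 t] by (cases "t = 0") auto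
  finally show ?thesis .
next
  case False
  then have "1 \<le> t powr \<theta>" using assms by (intro ge_one_powr_ge_zero) auto
  then show ?thesis using exp_gt_zero[of "-t"] by linarith
qed

lemma nakagami_pdf_measurable [measurable]: "nakagami_pdf m \<in> borel_measurable borel"
  unfolding nakagami_pdf_def by measurable

lemma nakagami_pdf_nonneg: "m > 0 \<Longrightarrow> 0 \<le> nakagami_pdf m x"
  unfolding nakagami_pdf_def by simp

lemma nakagami_pdf_ge_powr:
  assumes m: "m > 0" and x: "x \<ge> 0" and \<theta>: "0 < \<theta>" "\<theta> \<le> 1"
  shows "2 * m powr m / Gamma m * x powr (2*m-1)
      \<le> nakagami_pdf m x + 2 * m powr m / Gamma m * m powr \<theta> * x powr (2*m-1+2*\<theta>)"
proof -
  define c where "c = 2 * m powr m / Gamma m"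
  have c: "c > 0" unfolding c_def using m by simp
  have "1 - exp (- (m * x\<^sup>2)) \<le> (m * x\<^sup>2) powr \<theta>"
    using m \<theta> by (intro one_minus_exp_neg_le_powr) auto
  also have "(m * x\<^sup>2) powr \<theta> = m powr \<theta> * x powr (2*\<theta>)"
    using x m by (simp add: powr_mult powr_powr[symmetric] powr_numeral)
  finally have "c * x powr (2*m-1) * (1 - exp (- (m * x\<^sup>2))) \<le> c * x powr (2*m-1) * (m powr \<theta> * x powr (2*\<theta>))"
    using c by (intro mult_left_mono) auto
  moreover have "x powr (2*m-1) * x powr (2*\<theta>) = x powr (2*m-1+2*\<theta>)"
    by (simp add: powr_add)
  moreover have "nakagami_pdf m x = c * x powr (2*m-1) * exp (- m * x\<^sup>2)"
    using x unfolding nakagami_pdf_def c_def by simp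
  ultimately show ?thesis
    unfolding c_def[symmetric] by (simp add: algebra_simps)
qed

lemma nn_integral_indicator_atLeast_LIMSEQ:
  fixes F :: "real \<Rightarrow> ennreal" and B :: "nat \<Rightarrow> real"
  assumes F: "F \<in> borel_measurable borel" and B: "mono B" "filterlim B at_top sequentially"
  shows "(\<lambda>n. \<integral>\<^sup>+x. F x * indicator {0..B n} x \<partial>lborel) \<longlonglongrightarrow> (\<integral>\<^sup>+x. F x * indicator {0..} x \<partial>lborel)"
proof (rule nn_integral_LIMSEQ)
  show "incseq (\<lambda>n x. F x * indicator {0..B n} x)"
    using B(1) by (auto simp: incseq_def le_fun_def indicator_def monoD intro: order.trans)
  show "\<And>i. (\<lambda>x. F x * indicator {0..B i} x) \<in> borel_measurable lborel" using F by measurable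
  fix x :: real
  have "eventually (\<lambda>n. x \<le> B n) sequentially" using B(2) by (simp add: filterlim_at_top)
  then have "eventually (\<lambda>n. F x * indicator {0..B n} x = F x * indicator {0..} x) sequentially"
    by eventually_elim (auto simp: indicator_def)
  then show "(\<lambda>n. F x * indicator {0..B n} x) \<longlonglongrightarrow> F x * indicator {0..} x"
    by (rule tendsto_eventually)
qed

lemma Gamma_integrand_square_substitution:
  fixes m p y :: real
  assumes "m > 0" "y > 0"
  shows "(m * y\<^sup>2) powr (p - 1) / exp (m * y\<^sup>2) * (2 * m * y)
       = 2 * m powr p * y powr (2*p-1) * exp (- m * y\<^sup>2)"
proof -
  have "(m * y\<^sup>2) powr (p-1) = m powr (p-1) * y powr (2*p-2)"
  proof -
    have "y\<^sup>2 = y powr 2" using assms by (simp add: powr_numeral)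
    then have "(y\<^sup>2) powr (p-1) = y powr (2*p-2)" by (simp add: powr_powr algebra_simps)
    then show ?thesis using assms by (simp add: powr_mult)
  qed
  then have "(m * y\<^sup>2) powr (p - 1) / exp (m * y\<^sup>2) * (2 * m * y)
      = 2 * (m powr (p-1) * m) * (y powr (2*p-2) * y) / exp (m * y\<^sup>2)"
    by (simp add: mult_ac)
  also have "m powr (p-1) * m = m powr p" using assms by (simp add: powr_diff)
  also have "y powr (2*p-2) * y = y powr (2*p-1)"
    using assms powr_add[of y "2*p-2" 1] by simp
  also have "2 * m powr p * y powr (2*p-1) / exp (m * y\<^sup>2) = 2 * m powr p * y powr (2*p-1) * exp (- m * y\<^sup>2)"
    by (simp add: exp_minus divide_inverse)
  finally show ?thesis .
qed

lemma nn_integral_Gamma_square_truncated: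
  fixes m p B :: real
  assumes m: "m > 0" and B: "B \<ge> 0"
  shows "(\<integral>\<^sup>+t. ennreal (t powr (p - 1) / exp t) * indicator {0..m * B\<^sup>2} t \<partial>lborel) =
         (\<integral>\<^sup>+y. ennreal (2 * m powr p * y powr (2*p-1) * exp (- m * y\<^sup>2)) * indicator {0..B} y \<partial>lborel)"
proof -
  define \<phi> where "\<phi> t = t powr (p - 1) / exp t" for t :: real
  have "(\<integral>\<^sup>+t. ennreal (\<phi> t) * indicator {0..m * B\<^sup>2} t \<partial>lborel)
      = (\<integral>\<^sup>+t. \<phi> t * indicator {(\<lambda>y. m * y\<^sup>2) 0..(\<lambda>y. m * y\<^sup>2) B} t \<partial>lborel)"
    by (intro nn_integral_cong) (auto simp: indicator_def)
  also have "\<dots> = (\<integral>\<^sup>+y. \<phi> (m * y\<^sup>2) * (2 * m * y) * indicator {0..B} y \<partial>lborel)"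
  proof (rule nn_integral_substitution)
    show "set_borel_measurable borel {(\<lambda>y. m * y\<^sup>2) 0..(\<lambda>y. m * y\<^sup>2) B} \<phi>"
      unfolding \<phi>_def set_borel_measurable_def by measurable
    show "((\<lambda>y. m * y\<^sup>2) has_real_derivative 2 * m * x) (at x)" for x
      by (auto intro!: derivative_eq_intros)
  qed (use m B in \<open>auto intro!: continuous_intros\<close>)
  also have "\<dots> = (\<integral>\<^sup>+y. ennreal (2 * m powr p * y powr (2*p-1) * exp (- m * y\<^sup>2)) * indicator {0..B} y \<partial>lborel)"
  proof (intro nn_integral_cong)
    fix y :: real
    show "ennreal (\<phi> (m * y\<^sup>2) * (2 * m * y) * indicator {0..B} y)
        = ennreal (2 * m powr p * y powr (2*p-1) * exp (- m * y\<^sup>2)) * indicator {0..B} y"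
    proof (cases "y > 0")
      case True
      then show ?thesis
        using Gamma_integrand_square_substitution[OF m True, of p] by (simp add: \<phi>_def indicator_def)
    next
      case False
      then show ?thesis unfolding \<phi>_def by (cases "y = 0") (auto simp: indicator_def)
    qed
  qed
  finally show ?thesis unfolding \<phi>_def .
qed

lemma nn_integral_Gamma_square:
  fixes m p :: real
  assumes m: "m > 0" and p: "p > 0"
  shows "(\<integral>\<^sup>+y. ennreal (2 * m powr p * y powr (2*p-1) * exp (- m * y\<^sup>2)) * indicator {0..} y \<partial>lborel)
          = ennreal (Gamma p)"
proof -
  define \<phi> where "\<phi> t = t powr (p - 1) / exp t" for t :: real
  define h where "h y = 2 * m powr p * y powr (2*p-1) * exp (- m * y\<^sup>2)" for y :: real
  have "(\<lambda>n. \<integral>\<^sup>+t. ennreal (\<phi> t) * indicator {0..m * (real n)\<^sup>2} t \<partial>lborel) \<longlonglongrightarrow>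
      (\<integral>\<^sup>+t. ennreal (\<phi> t) * indicator {0..} t \<partial>lborel)"
  proof (rule nn_integral_indicator_atLeast_LIMSEQ)
    show "mono (\<lambda>n. m * (real n)\<^sup>2)" using m by (auto intro!: monoI mult_left_mono power_mono)
    show "filterlim (\<lambda>n. m * (real n)\<^sup>2) at_top sequentially" using m
      by (intro filterlim_tendsto_pos_mult_at_top[OF tendsto_const m] filterlim_pow_at_top
          filterlim_real_sequentially) auto
  qed (simp add: \<phi>_def)
  moreover have "(\<lambda>n. \<integral>\<^sup>+y. ennreal (h y) * indicator {0..real n} y \<partial>lborel) \<longlonglongrightarrow>
      (\<integral>\<^sup>+y. ennreal (h y) * indicator {0..} y \<partial>lborel)"
    by (rule nn_integral_indicator_atLeast_LIMSEQ) (auto simp: h_def mono_def filterlim_real_sequentially)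
  ultimately have "(\<integral>\<^sup>+y. ennreal (h y) * indicator {0..} y \<partial>lborel)
      = (\<integral>\<^sup>+t. ennreal (\<phi> t) * indicator {0..} t \<partial>lborel)"
    unfolding \<phi>_def h_def nn_integral_Gamma_square_truncated[OF m of_nat_0_le_iff]
    by (rule LIMSEQ_unique[rotated])
  also have "\<dots> = (\<integral>\<^sup>+t. ennreal (indicator {0..} t * \<phi> t) \<partial>lborel)"
    by (intro nn_integral_cong) (auto simp: indicator_def)
  also have "\<dots> = ennreal (Gamma p)"
    using Gamma_integral_real[OF p] unfolding \<phi>_def
    by (intro nn_integral_has_integral_lebesgue) auto
  finally show ?thesis unfolding h_def .
qed

context prob_space
begin

lemma emeasure_le_eq_nn_integral_density:
  fixes X :: "'a \<Rightarrow> real"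
  assumes "distributed M lborel X f"
  shows "emeasure M {\<omega>\<in>space M. X \<omega> \<le> u} = (\<integral>\<^sup>+x. f x * indicator {..u} x \<partial>lborel)"
proof -
  have X: "X \<in> measurable M lborel" using assms by (rule distributed_measurable)
  have "{\<omega>\<in>space M. X \<omega> \<le> u} = X -` {..u} \<inter> space M" by auto
  then have "emeasure M {\<omega>\<in>space M. X \<omega> \<le> u} = emeasure (distr M lborel X) {..u}"
    by (subst emeasure_distr[OF X]) (auto simp: atMost_borel)
  also have "\<dots> = emeasure (density lborel f) {..u}"
    using distributed_distr_eq_density[OF assms] by simp
  also have "\<dots> = (\<integral>\<^sup>+x. f x * indicator {..u} x \<partial>lborel)"
    using distributed_borel_measurable[OF assms] by (simp add: emeasure_density)
  finally show ?thesis .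
qed

lemma nakagami_cdf_le:
  assumes D: "distributed M lborel X (\<lambda>x. ennreal (nakagami_pdf m x))" and m: "m > 0" and u: "u \<ge> 0"
  shows "cdf_of M X u \<le> m powr (m-1) / Gamma m * u powr (2*m)"
proof -
  define c where "c = 2 * m powr m / Gamma m"
  have c: "c > 0" unfolding c_def using m by simp
  have "ennreal (cdf_of M X u) = (\<integral>\<^sup>+x. ennreal (nakagami_pdf m x) * indicator {..u} x \<partial>lborel)"
    using emeasure_le_eq_nn_integral_density[OF D] by (simp add: cdf_of_def emeasure_eq_measure)
  also have "\<dots> \<le> (\<integral>\<^sup>+x. ennreal (indicator {0..u} x * (c * x powr (2*m-1))) \<partial>lborel)"
  proof (intro nn_integral_mono)
    fix x :: real
    have "c * x powr (2*m-1) * exp (- m * x\<^sup>2) \<le> c * x powr (2*m-1)"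
      using c m by (intro mult_left_le) auto
    then show "ennreal (nakagami_pdf m x) * indicator {..u} x \<le> ennreal (indicator {0..u} x * (c * x powr (2*m-1)))"
      by (auto simp: nakagami_pdf_def c_def indicator_def intro: ennreal_leI)
  qed
  also have "\<dots> = ennreal (m powr (m-1) / Gamma m * u powr (2*m))"
    using c m u by (subst nn_integral_indicator_powr) (auto simp: c_def powr_diff field_simps)
  finally show ?thesis
    using m u by (subst (asm) ennreal_le_iff) auto
qed

lemma nakagami_cdf_ge:
  assumes D: "distributed M lborel X (\<lambda>x. ennreal (nakagami_pdf m x))" and m: "m \<ge> 1/2" and u: "u \<ge> 0"
    and \<theta>: "0 < \<theta>" "\<theta> \<le> 1"
  shows "m powr (m-1) / Gamma m * u powr (2*m) \<le> cdf_of M X u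
           + 2 * m powr m / Gamma m * m powr \<theta> / (2*m+2*\<theta>) * u powr (2*m+2*\<theta>)"
proof -
  define c where "c = 2 * m powr m / Gamma m"
  have c: "c > 0" unfolding c_def using m by simp
  have "ennreal (m powr (m-1) / Gamma m * u powr (2*m))
      = (\<integral>\<^sup>+x. ennreal (indicator {0..u} x * (c * x powr (2*m-1))) \<partial>lborel)"
    using c m u by (subst nn_integral_indicator_powr) (auto simp: c_def powr_diff field_simps)
  also have "\<dots> \<le> (\<integral>\<^sup>+x. ennreal (nakagami_pdf m x) * indicator {..u} x +
        ennreal (indicator {0..u} x * ((c * m powr \<theta>) * x powr (2*m-1+2*\<theta>))) \<partial>lborel)"
  proof (intro nn_integral_mono)
    fix x :: real
    show "ennreal (indicator {0..u} x * (c * x powr (2*m-1))) \<le> ennreal (nakagami_pdf m x) * indicator {..u} x +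
        ennreal (indicator {0..u} x * ((c * m powr \<theta>) * x powr (2*m-1+2*\<theta>)))"
    proof (cases "0 \<le> x \<and> x \<le> u")
      case True
      then have "ennreal (c * x powr (2*m-1)) \<le> ennreal (nakagami_pdf m x + c * m powr \<theta> * x powr (2*m-1+2*\<theta>))"
        using nakagami_pdf_ge_powr[of m x \<theta>] m \<theta> by (intro ennreal_leI) (simp add: c_def)
      also have "\<dots> = ennreal (nakagami_pdf m x) + ennreal (c * m powr \<theta> * x powr (2*m-1+2*\<theta>))"
        using c m by (intro ennreal_plus nakagami_pdf_nonneg) auto
      finally show ?thesis
        using True by (simp add: indicator_def)
    qed (auto simp: indicator_def)
  qed
  also have "\<dots> = (\<integral>\<^sup>+x. ennreal (nakagami_pdf m x) * indicator {..u} x \<partial>lborel) +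
      (\<integral>\<^sup>+x. ennreal (indicator {0..u} x * ((c * m powr \<theta>) * x powr (2*m-1+2*\<theta>))) \<partial>lborel)"
    by (rule nn_integral_add) auto
  also have "\<dots> = ennreal (cdf_of M X u) +
      ennreal (2 * m powr m / Gamma m * m powr \<theta> / (2*m+2*\<theta>) * u powr (2*m+2*\<theta>))"
  proof -
    have "(\<integral>\<^sup>+x. ennreal (nakagami_pdf m x) * indicator {..u} x \<partial>lborel) = ennreal (cdf_of M X u)"
      using emeasure_le_eq_nn_integral_density[OF D] by (simp add: cdf_of_def emeasure_eq_measure)
    moreover have "(\<integral>\<^sup>+x. ennreal (indicator {0..u} x * ((c * m powr \<theta>) * x powr (2*m-1+2*\<theta>))) \<partial>lborel)
        = ennreal (2 * m powr m / Gamma m * m powr \<theta> / (2*m+2*\<theta>) * u powr (2*m+2*\<theta>))"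
      using c m \<theta> u by (subst nn_integral_indicator_powr) (auto simp: c_def)
    ultimately show ?thesis by simp
  qed
  also have "\<dots> = ennreal (cdf_of M X u +
      2 * m powr m / Gamma m * m powr \<theta> / (2*m+2*\<theta>) * u powr (2*m+2*\<theta>))"
    using m \<theta> by (intro ennreal_plus[symmetric]) (auto simp: cdf_of_def)
  finally show ?thesis
    using m \<theta> by (subst (asm) ennreal_le_iff) (auto simp: cdf_of_def intro!: add_nonneg_nonneg)
qed

lemma nakagami_neg_moment:
  assumes D: "distributed M lborel X (\<lambda>x. ennreal (nakagami_pdf m x))" and r: "0 \<le> r" "r < m"
  shows "(\<integral>\<^sup>+\<omega>. ennreal (X \<omega> powr (-2*r)) \<partial>M) = ennreal (m powr r * Gamma (m - r) / Gamma m)"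
proof -
  define p where "p = m - r"
  have p: "p > 0" and m: "m > 0" using r unfolding p_def by simp_all
  define K where "K = m powr m / Gamma m / m powr p"
  have K: "K > 0" unfolding K_def using m by simp
  have "(\<integral>\<^sup>+\<omega>. ennreal (X \<omega> powr (-2*r)) \<partial>M)
      = (\<integral>\<^sup>+x. ennreal (nakagami_pdf m x) * ennreal (x powr (-2*r)) \<partial>lborel)"
    by (rule distributed_nn_integral[OF D, symmetric]) measurable
  also have "\<dots> = (\<integral>\<^sup>+x. ennreal K * (ennreal (2 * m powr p * x powr (2*p-1) * exp (- m * x\<^sup>2)) * indicator {0..} x) \<partial>lborel)"
  proof (intro nn_integral_cong)
    fix x :: real
    show "ennreal (nakagami_pdf m x) * ennreal (x powr (-2*r)) =
       ennreal K * (ennreal (2 * m powr p * x powr (2*p-1) * exp (- m * x\<^sup>2)) * indicator {0..} x)"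
    proof (cases "x > 0")
      case True
      have pw: "x powr (2*m-1) * x powr (-2*r) = x powr (2*p-1)"
        unfolding p_def by (simp add: powr_add[symmetric] algebra_simps)
      have Kp: "K * (2 * m powr p) = 2 * m powr m / Gamma m"
        unfolding K_def using m by simp
      have "nakagami_pdf m x * x powr (-2*r)
          = (2 * m powr m / Gamma m) * (x powr (2*m-1) * x powr (-2*r)) * exp (- m * x\<^sup>2)"
        using True unfolding nakagami_pdf_def by (simp only: if_True mult_ac less_imp_le)
      also have "\<dots> = (K * (2 * m powr p)) * x powr (2*p-1) * exp (- m * x\<^sup>2)"
        by (simp only: Kp pw)
      finally have "nakagami_pdf m x * x powr (-2*r) = K * (2 * m powr p * x powr (2*p-1) * exp (- m * x\<^sup>2))"
        by (simp only: mult_ac)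
      then show ?thesis
        using True K nakagami_pdf_nonneg[OF m]
        by (simp add: ennreal_mult'[symmetric] ennreal_mult[symmetric] indicator_def)
    qed (cases "x = 0"; auto simp: nakagami_pdf_def indicator_def)
  qed
  also have "\<dots> = ennreal K * ennreal (Gamma p)"
    using nn_integral_Gamma_square[OF m p] by (subst nn_integral_cmult) auto
  also have "\<dots> = ennreal (m powr r * Gamma (m - r) / Gamma m)"
    using K p m by (simp add: ennreal_mult[symmetric] K_def p_def powr_diff field_simps)
  finally show ?thesis .
qed

lemma nakagami_AE_pos:
  assumes D: "distributed M lborel Y (\<lambda>x. ennreal (nakagami_pdf m x))"
  shows "AE y in distr M borel Y. 0 < y"
proof -
  have "distr M borel Y = density lborel (\<lambda>x. ennreal (nakagami_pdf m x))"
    using distributed_distr_eq_density[OF D] by (simp add: distr_def)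
  moreover have "AE y in density lborel (\<lambda>x. ennreal (nakagami_pdf m x)). 0 < y"
    by (subst AE_density) (auto simp: nakagami_pdf_def less_le intro!: AE_I2)
  ultimately show ?thesis by (simp only:)
qed

end

section \<open>Power bounds for products of independent variables\<close>

definition cdf_sandwich :: "'a measure \<Rightarrow> ('a \<Rightarrow> real) \<Rightarrow> real \<Rightarrow> real \<Rightarrow> real \<Rightarrow> bool" where
  "cdf_sandwich M X A a \<eta> \<longleftrightarrow> (\<exists>B\<ge>0. \<forall>u\<in>{0..1}.
     cdf_of M X u \<le> A * u powr a \<and> A * u powr a \<le> cdf_of M X u + B * u powr (a + \<eta>))"

context prob_space
begin

lemma emeasure_indep_pair_eq_nn_integral:
  fixes X Y :: "'a \<Rightarrow> real"
  assumes ind: "indep_var borel X borel Y"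
    and P: "Measurable.pred (borel \<Otimes>\<^sub>M borel) (\<lambda>(x,y). P x y)"
  shows "emeasure M {\<omega>\<in>space M. P (X \<omega>) (Y \<omega>)} = (\<integral>\<^sup>+y. emeasure M {\<omega>\<in>space M. P (X \<omega>) y} \<partial>distr M borel Y)"
proof -
  have rv: "random_variable borel X" "random_variable borel Y"
    and eq: "distr M borel X \<Otimes>\<^sub>M distr M borel Y = distr M (borel \<Otimes>\<^sub>M borel) (\<lambda>x. (X x, Y x))"
    using ind unfolding indep_var_distribution_eq by auto
  interpret PX: prob_space "distr M borel X" by (rule prob_space_distr) fact
  interpret PY: prob_space "distr M borel Y" by (rule prob_space_distr) fact
  interpret PXY: pair_sigma_finite "distr M borel X" "distr M borel Y" ..
  define S where "S = {xy \<in> space (borel \<Otimes>\<^sub>M borel). P (fst xy) (snd xy)}"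
  have S: "S \<in> sets (borel \<Otimes>\<^sub>M borel)"
  proof -
    have "S = {xy \<in> space (borel \<Otimes>\<^sub>M borel). (\<lambda>(x,y). P x y) xy}"
      unfolding S_def by (auto simp: split_beta)
    then show ?thesis using P unfolding pred_def by simp
  qed
  have "{\<omega>\<in>space M. P (X \<omega>) (Y \<omega>)} = (\<lambda>x. (X x, Y x)) -` S \<inter> space M"
    unfolding S_def by (auto simp: space_pair_measure)
  moreover have "(\<lambda>x. (X x, Y x)) \<in> measurable M (borel \<Otimes>\<^sub>M borel)"
    using rv by (rule measurable_Pair)
  ultimately have "emeasure M {\<omega>\<in>space M. P (X \<omega>) (Y \<omega>)}
      = emeasure (distr M (borel \<Otimes>\<^sub>M borel) (\<lambda>x. (X x, Y x))) S"
    using S by (simp only: emeasure_distr)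
  also have "\<dots> = emeasure (distr M borel X \<Otimes>\<^sub>M distr M borel Y) S" by (simp only: eq)
  also have "\<dots> = (\<integral>\<^sup>+y. emeasure (distr M borel X) ((\<lambda>x. (x, y)) -` S) \<partial>distr M borel Y)"
  proof (rule PXY.emeasure_pair_measure_alt2)
    have "sets (distr M borel X \<Otimes>\<^sub>M distr M borel Y) = sets (borel \<Otimes>\<^sub>M borel)"
      by (intro sets_pair_measure_cong) auto
    then show "S \<in> sets (distr M borel X \<Otimes>\<^sub>M distr M borel Y)" using S by simp
  qed
  also have "\<dots> = (\<integral>\<^sup>+y. emeasure M {\<omega>\<in>space M. P (X \<omega>) y} \<partial>distr M borel Y)"
  proof (intro nn_integral_cong)
    fix y
    have "(\<lambda>x. (x, y)) -` S = {x. P x y}" unfolding S_def by (auto simp: space_pair_measure)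
    moreover have "{x. P x y} \<in> sets borel"
    proof -
      have "(\<lambda>x. (x, y)) \<in> measurable borel (borel \<Otimes>\<^sub>M borel)" by measurable
      from measurable_compose[OF this P] show ?thesis by (simp add: pred_def)
    qed
    moreover have "X -` {x. P x y} \<inter> space M = {\<omega>\<in>space M. P (X \<omega>) y}" by auto
    ultimately show "emeasure (distr M borel X) ((\<lambda>x. (x, y)) -` S) = emeasure M {\<omega>\<in>space M. P (X \<omega>) y}"
      using rv by (metis emeasure_distr sets_borel)
  qed
  finally show ?thesis .
qed

lemma borel_measurable_emeasure_section:
  fixes X :: "'a \<Rightarrow> real"
  assumes X: "random_variable borel X" and P: "Measurable.pred (borel \<Otimes>\<^sub>M borel) (\<lambda>(x,y). P x y)"
  shows "(\<lambda>y. emeasure M {\<omega>\<in>space M. P (X \<omega>) y}) \<in> borel_measurable borel"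
proof -
  define Q where "Q = {yw \<in> space (borel \<Otimes>\<^sub>M M). P (X (snd yw)) (fst yw)}"
  have "(\<lambda>yw. (X (snd yw), fst yw)) \<in> measurable (borel \<Otimes>\<^sub>M M) (borel \<Otimes>\<^sub>M borel)"
    using X by measurable
  from measurable_compose[OF this P] have Q: "Q \<in> sets (borel \<Otimes>\<^sub>M M)"
    unfolding Q_def pred_def by (simp add: split_beta)
  have "Pair y -` Q = {\<omega>\<in>space M. P (X \<omega>) y}" for y
    unfolding Q_def by (auto simp: space_pair_measure)
  with measurable_emeasure_Pair[OF Q] show ?thesis by simp
qed

lemma emeasure_mult_le_eq_nn_integral_cdf:
  fixes X Y :: "'a \<Rightarrow> real"
  assumes ind: "indep_var borel X borel Y" and Ypos: "AE y in distr M borel Y. 0 < y"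
  shows "ennreal (cdf_of M (\<lambda>\<omega>. X \<omega> * Y \<omega>) z) = (\<integral>\<^sup>+y. ennreal (cdf_of M X (z / y)) \<partial>distr M borel Y)"
proof -
  have "ennreal (cdf_of M (\<lambda>\<omega>. X \<omega> * Y \<omega>) z) = (\<integral>\<^sup>+y. emeasure M {\<omega>\<in>space M. X \<omega> * y \<le> z} \<partial>distr M borel Y)"
    unfolding cdf_of_def emeasure_eq_measure[symmetric]
    by (rule emeasure_indep_pair_eq_nn_integral[OF ind, where P="\<lambda>x y. x * y \<le> z"]) measurable
  also have "\<dots> = (\<integral>\<^sup>+y. ennreal (cdf_of M X (z / y)) \<partial>distr M borel Y)"
    using Ypos
  proof (intro nn_integral_cong_AE, eventually_elim)
    case (elim y)
    then have "{\<omega>\<in>space M. X \<omega> * y \<le> z} = {\<omega>\<in>space M. X \<omega> \<le> z / y}"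
      by (auto simp: field_simps)
    then show ?case unfolding cdf_of_def by (simp add: emeasure_eq_measure)
  qed
  finally show ?thesis .
qed

lemma nn_integral_distr_div_powr:
  fixes Y :: "'a \<Rightarrow> real"
  assumes Y: "random_variable borel Y" and Ypos: "AE y in distr M borel Y. 0 < y"
    and E: "(\<integral>\<^sup>+\<omega>. ennreal (Y \<omega> powr (-p)) \<partial>M) = ennreal E" "E \<ge> 0" and k: "k \<ge> 0" and z: "z \<ge> 0"
  shows "(\<integral>\<^sup>+y. ennreal (k * (z / y) powr p) \<partial>distr M borel Y) = ennreal (k * E * z powr p)"
proof -
  have "(\<integral>\<^sup>+y. ennreal (k * (z / y) powr p) \<partial>distr M borel Y)
      = (\<integral>\<^sup>+y. ennreal (k * z powr p) * ennreal (y powr (-p)) \<partial>distr M borel Y)"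
    using Ypos
  proof (intro nn_integral_cong_AE, eventually_elim)
    case (elim y)
    then have "(z / y) powr p = z powr p * y powr (-p)"
      using z by (simp add: powr_divide powr_minus_divide)
    then show ?case using k by (simp add: ennreal_mult[symmetric] mult.assoc)
  qed
  also have "\<dots> = ennreal (k * z powr p) * (\<integral>\<^sup>+\<omega>. ennreal (Y \<omega> powr (-p)) \<partial>M)"
    using Y by (simp add: nn_integral_cmult nn_integral_distr)
  also have "\<dots> = ennreal (k * E * z powr p)"
    using E k z by (simp add: ennreal_mult[symmetric] mult_ac)
  finally show ?thesis .
qed

lemma cdf_mult_le_of_cdf_le:
  fixes X Y :: "'a \<Rightarrow> real"
  assumes ind: "indep_var borel X borel Y" and Ypos: "AE y in distr M borel Y. 0 < y"
    and FX: "\<And>u. 0 \<le> u \<Longrightarrow> cdf_of M X u \<le> c * u powr p" and c: "c \<ge> 0"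
    and E: "(\<integral>\<^sup>+\<omega>. ennreal (Y \<omega> powr (-p)) \<partial>M) = ennreal E" "E \<ge> 0" and z: "z \<ge> 0"
  shows "cdf_of M (\<lambda>\<omega>. X \<omega> * Y \<omega>) z \<le> c * E * z powr p"
proof -
  have Y: "random_variable borel Y" using ind by (rule indep_var_rv2)
  have "ennreal (cdf_of M (\<lambda>\<omega>. X \<omega> * Y \<omega>) z) \<le> (\<integral>\<^sup>+y. ennreal (c * (z / y) powr p) \<partial>distr M borel Y)"
    unfolding emeasure_mult_le_eq_nn_integral_cdf[OF ind Ypos]
    using Ypos by (intro nn_integral_mono_AE, eventually_elim) (use z FX in \<open>auto intro: ennreal_leI\<close>)
  also have "\<dots> = ennreal (c * E * z powr p)"
    by (rule nn_integral_distr_div_powr[OF Y Ypos E c z])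
  finally show ?thesis
    using c E by (subst (asm) ennreal_le_iff) auto
qed

lemma cdf_mult_ge_of_cdf_ge:
  fixes X Y :: "'a \<Rightarrow> real"
  assumes ind: "indep_var borel X borel Y" and Ypos: "AE y in distr M borel Y. 0 < y"
    and FX: "\<And>u. 0 \<le> u \<Longrightarrow> c * u powr p \<le> cdf_of M X u + d * u powr q" and c: "c \<ge> 0" and d: "d \<ge> 0"
    and E1: "(\<integral>\<^sup>+\<omega>. ennreal (Y \<omega> powr (-p)) \<partial>M) = ennreal E1" "E1 \<ge> 0"
    and E2: "(\<integral>\<^sup>+\<omega>. ennreal (Y \<omega> powr (-q)) \<partial>M) = ennreal E2" "E2 \<ge> 0" and z: "z \<ge> 0"
  shows "c * E1 * z powr p \<le> cdf_of M (\<lambda>\<omega>. X \<omega> * Y \<omega>) z + d * E2 * z powr q"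
proof -
  have Y: "random_variable borel Y" using ind by (rule indep_var_rv2)
  have FX_meas: "(\<lambda>y. ennreal (cdf_of M X (z / y))) \<in> borel_measurable borel"
    using borel_measurable_emeasure_section[OF indep_var_rv1[OF ind], of "\<lambda>x y. x \<le> z / y"]
    by (simp add: cdf_of_def emeasure_eq_measure)
  have "ennreal (c * E1 * z powr p) = (\<integral>\<^sup>+y. ennreal (c * (z / y) powr p) \<partial>distr M borel Y)"
    by (rule nn_integral_distr_div_powr[OF Y Ypos E1 c z, symmetric])
  also have "\<dots> \<le> (\<integral>\<^sup>+y. ennreal (cdf_of M X (z / y)) + ennreal (d * (z / y) powr q) \<partial>distr M borel Y)"
    using Ypos
  proof (intro nn_integral_mono_AE, eventually_elim)
    case (elim y)
    then have "ennreal (c * (z / y) powr p) \<le> ennreal (cdf_of M X (z / y) + d * (z / y) powr q)"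
      using FX[of "z / y"] z by (intro ennreal_leI) simp
    also have "\<dots> = ennreal (cdf_of M X (z / y)) + ennreal (d * (z / y) powr q)"
      using d by (intro ennreal_plus) (auto simp: cdf_of_def)
    finally show ?case .
  qed
  also have "\<dots> = ennreal (cdf_of M (\<lambda>\<omega>. X \<omega> * Y \<omega>) z) + ennreal (d * E2 * z powr q)"
    using emeasure_mult_le_eq_nn_integral_cdf[OF ind Ypos] nn_integral_distr_div_powr[OF Y Ypos E2 d z]
    using FX_meas by (subst nn_integral_add) auto
  also have "\<dots> = ennreal (cdf_of M (\<lambda>\<omega>. X \<omega> * Y \<omega>) z + d * E2 * z powr q)"
    using d E2 z by (intro ennreal_plus[symmetric]) (auto simp: cdf_of_def)
  finally show ?thesis
    using d E2 z by (subst (asm) ennreal_le_iff) (auto simp: cdf_of_def intro!: add_nonneg_nonneg)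
qed

lemma cdf_sandwich_nakagami_product:
  fixes X Y :: "'a \<Rightarrow> real"
  assumes DX: "distributed M lborel X (\<lambda>x. ennreal (nakagami_pdf m1 x))"
    and DY: "distributed M lborel Y (\<lambda>x. ennreal (nakagami_pdf m2 x))"
    and ind: "indep_var borel X borel Y" and m: "1/2 \<le> m1" "m1 < m2"
  shows "cdf_sandwich M (\<lambda>\<omega>. X \<omega> * Y \<omega>) (phi_const m1 m2 / Gamma (2*m1+1)) (2*m1) (min 2 (m2 - m1))"
proof -
  define \<theta> where "\<theta> = min 1 ((m2 - m1) / 2)"
  have \<theta>: "0 < \<theta>" "\<theta> \<le> 1" "m1 + \<theta> < m2" "2 * \<theta> = min 2 (m2 - m1)"
    using m unfolding \<theta>_def by (auto simp: min_def field_simps)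
  define c where "c = m1 powr (m1-1) / Gamma m1"
  define d where "d = 2 * m1 powr m1 / Gamma m1 * m1 powr \<theta> / (2*m1+2*\<theta>)"
  define E1 where "E1 = m2 powr m1 * Gamma (m2 - m1) / Gamma m2"
  define E2 where "E2 = m2 powr (m1+\<theta>) * Gamma (m2 - (m1+\<theta>)) / Gamma m2"
  have pos: "c \<ge> 0" "d \<ge> 0" "E1 \<ge> 0" "E2 \<ge> 0"
    unfolding c_def d_def E1_def E2_def using m \<theta> by auto
  have mom: "(\<integral>\<^sup>+\<omega>. ennreal (Y \<omega> powr (-(2*m1))) \<partial>M) = ennreal E1"
    "(\<integral>\<^sup>+\<omega>. ennreal (Y \<omega> powr (-(2*m1+2*\<theta>))) \<partial>M) = ennreal E2"
    using nakagami_neg_moment[OF DY, of m1] nakagami_neg_moment[OF DY, of "m1+\<theta>"] m \<theta>(1-3)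
    by (simp_all add: E1_def E2_def algebra_simps)
  have Ypos: "AE y in distr M borel Y. 0 < y" by (rule nakagami_AE_pos[OF DY])
  have "c * E1 = phi_const m1 m2 / Gamma (2*m1+1)"
  proof -
    have G: "Gamma (2*m1+1) \<noteq> 0" using m by (intro less_imp_neq[symmetric] Gamma_real_pos) simp
    show ?thesis using phi_const_eq[of m1 m2] m by (simp add: c_def E1_def G)
  qed
  moreover have "cdf_of M (\<lambda>\<omega>. X \<omega> * Y \<omega>) u \<le> c * E1 * u powr (2*m1)" if "u \<ge> 0" for u
    by (rule cdf_mult_le_of_cdf_le[OF ind Ypos _ pos(1) mom(1) pos(3) that])
      (use nakagami_cdf_le[OF DX] m in \<open>simp add: c_def\<close>)
  moreover have "c * E1 * u powr (2*m1) \<le> cdf_of M (\<lambda>\<omega>. X \<omega> * Y \<omega>) u + d * E2 * u powr (2*m1 + 2*\<theta>)"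
    if "u \<ge> 0" for u
    by (rule cdf_mult_ge_of_cdf_ge[OF ind Ypos _ pos(1,2) mom(1) pos(3) mom(2) pos(4) that])
      (use nakagami_cdf_ge[OF DX m(1) _ \<theta>(1,2)] in \<open>simp add: c_def d_def\<close>)
  ultimately show ?thesis
    unfolding cdf_sandwich_def \<theta>(4)[symmetric] using pos
    by (intro exI[of _ "d * E2"]) auto
qed

end

section \<open>Power bounds for sums of independent variables\<close>

lemma nn_integral_Beta_kernel:
  fixes a b y K :: real
  assumes "a \<ge> 1" "b > 0" "y \<ge> 0" "K \<ge> 0"
  shows "(\<integral>\<^sup>+s. ennreal (indicator {0..y} s * (K * (a * (y - s) powr (a - 1) * s powr b))) \<partial>lborel)
       = ennreal (K * (Gamma (a+1) * Gamma (b+1) / Gamma (a+b+1)) * y powr (a+b))"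
proof -
  have "((\<lambda>s. K * (a * (y - s) powr (a - 1) * s powr b)) has_integral
      K * (Gamma (a+1) * Gamma (b+1) / Gamma (a+b+1) * y powr (a+b))) {0..y}"
    using has_integral_Beta_kernel[of a b y] assms by (intro has_integral_mult_right) auto
  from nn_integral_has_integral_lebesgue[OF _ this] show ?thesis
    using assms by (auto simp: mult_ac)
qed

lemma cdf_sandwich_coeff_nonneg:
  assumes "cdf_sandwich M X A a \<eta>"
  shows "A \<ge> 0"
proof -
  from assms have "cdf_of M X 1 \<le> A * 1 powr a"
    unfolding cdf_sandwich_def by (force dest: bspec[of _ _ 1])
  then show ?thesis by (simp add: cdf_of_def order.trans[OF measure_nonneg])
qed

lemma asymp_equiv_of_cdf_sandwich:
  assumes "cdf_sandwich M X c \<alpha> \<eta>" and c: "c > 0" and \<eta>: "\<eta> > 0"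
  shows "cdf_of M X \<sim>[at_right 0] (\<lambda>u. c * u powr \<alpha>)"
proof -
  obtain B where FB: "\<And>u. u \<in> {0..1} \<Longrightarrow> cdf_of M X u \<le> c * u powr \<alpha> \<and>
      c * u powr \<alpha> \<le> cdf_of M X u + B * u powr (\<alpha> + \<eta>)"
    using assms(1) unfolding cdf_sandwich_def by blast
  show ?thesis
  proof (rule asymp_equiv_sandwich_real[where l="\<lambda>u. c * u powr \<alpha> - B * u powr (\<alpha>+\<eta>)" and u="\<lambda>u. c * u powr \<alpha>"])
    have "((\<lambda>u. 1 - (B / c) * u powr \<eta>) \<longlongrightarrow> 1 - (B / c) * 0) (at_right 0)"
      by (intro tendsto_intros tendsto_powr_at_right_0 \<eta>)
    moreover have "\<forall>\<^sub>F u in at_right 0. 1 - B / c * u powr \<eta> = (c * u powr \<alpha> - B * u powr (\<alpha>+\<eta>)) / (c * u powr \<alpha>)"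
      using eventually_at_right_less by eventually_elim (use c in \<open>simp add: powr_add field_simps\<close>)
    ultimately show "(\<lambda>u. c * u powr \<alpha> - B * u powr (\<alpha>+\<eta>)) \<sim>[at_right 0] (\<lambda>u. c * u powr \<alpha>)"
      by (intro asymp_equivI') (simp add: tendsto_cong)
    have "\<forall>\<^sub>F u in at_right 0. 0 < u \<and> u < (1::real)"
      using eventually_at_right_real[of 0 1] by simp
    then show "\<forall>\<^sub>F u in at_right 0. cdf_of M X u \<in> {c * u powr \<alpha> - B * u powr (\<alpha>+\<eta>)..c * u powr \<alpha>}"
    proof eventually_elim
      case (elim u)
      then show ?case using FB[of u] by auto
    qed
  qed simp
qed

context prob_space
begin

lemma cdf_sandwich_cdf_nonpos:
  assumes "cdf_sandwich M X A a \<eta>" and X: "random_variable borel X" and u: "u \<le> 0"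
  shows "cdf_of M X u = 0"
proof -
  from assms(1) have "cdf_of M X 0 \<le> A * 0 powr a"
    unfolding cdf_sandwich_def by (force dest: bspec[of _ _ 0])
  moreover have "cdf_of M X u \<le> cdf_of M X 0"
    unfolding cdf_of_def using X u by (intro finite_measure_mono) auto
  ultimately show ?thesis by (simp add: cdf_of_def order.antisym)
qed

lemma cdf_sandwich_AE_nonneg:
  assumes "cdf_sandwich M X A a \<eta>" and X: "random_variable borel X"
  shows "AE t in distr M borel X. 0 \<le> t"
proof -
  have "AE \<omega> in M. 0 \<le> X \<omega>"
  proof (rule AE_I[where N="{\<omega>\<in>space M. X \<omega> \<le> 0}"])
    show "emeasure M {\<omega>\<in>space M. X \<omega> \<le> 0} = 0"
      using cdf_sandwich_cdf_nonpos[OF assms, of 0] unfolding cdf_of_def by (simp add: emeasure_eq_measure)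
  qed (use X in auto)
  then show ?thesis using X by (subst AE_distr_iff) auto
qed

lemma nn_integral_pos_part_powr_eq:
  fixes Y :: "'a \<Rightarrow> real"
  assumes Y: "random_variable borel Y" and a: "a \<ge> 1"
  shows "(\<integral>\<^sup>+t. ennreal ((max 0 (y - t)) powr a) \<partial>distr M borel Y) =
         (\<integral>\<^sup>+s. ennreal (indicator {..y} s * (a * (y - s) powr (a-1))) * ennreal (cdf_of M Y s) \<partial>lborel)"
proof -
  define g where "g s = ennreal (indicator {..y} s * (a * (y - s) powr (a-1)))" for s
  have [measurable]: "g \<in> borel_measurable borel" unfolding g_def by measurable
  interpret PY: prob_space "distr M borel Y" by (rule prob_space_distr) fact
  interpret PP: pair_sigma_finite "distr M borel Y" lborel ..
  have inner: "ennreal ((max 0 (y - t)) powr a) = (\<integral>\<^sup>+s. g s * indicator {t..} s \<partial>lborel)" for t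
  proof (cases "t \<le> y")
    case True
    have "(\<integral>\<^sup>+s. g s * indicator {t..} s \<partial>lborel) = (\<integral>\<^sup>+s. ennreal (indicator {t..y} s * (a * (y - s) powr (a-1))) \<partial>lborel)"
      unfolding g_def by (intro nn_integral_cong) (auto simp: indicator_def)
    also have "\<dots> = ennreal ((y - t) powr a)"
      using has_integral_reflected_powr[OF a True] a by (intro nn_integral_has_integral_lebesgue) auto
    finally show ?thesis using True by simp
  next
    case False
    then have "(\<lambda>s. g s * indicator {t..} s) = (\<lambda>s. 0)"
      unfolding g_def by (auto simp: indicator_def fun_eq_iff)
    then show ?thesis using False by simp
  qed
  have "(\<integral>\<^sup>+t. ennreal ((max 0 (y - t)) powr a) \<partial>distr M borel Y) =
        (\<integral>\<^sup>+t. (\<integral>\<^sup>+s. g s * indicator {t..} s \<partial>lborel) \<partial>distr M borel Y)"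
    by (simp add: inner)
  also have "\<dots> = (\<integral>\<^sup>+s. (\<integral>\<^sup>+t. g s * indicator {t..} s \<partial>distr M borel Y) \<partial>lborel)"
  proof (rule PP.Fubini'[symmetric])
    have "(\<lambda>ts::real\<times>real. g (snd ts) * (if fst ts \<le> snd ts then 1 else (0::ennreal))) \<in> borel_measurable (distr M borel Y \<Otimes>\<^sub>M lborel)"
      by measurable
    then show "(\<lambda>(t, s). g s * indicator {t..} s) \<in> borel_measurable (distr M borel Y \<Otimes>\<^sub>M lborel)"
      by (simp add: indicator_def split_beta')
  qed
  also have "\<dots> = (\<integral>\<^sup>+s. g s * ennreal (cdf_of M Y s) \<partial>lborel)"
  proof (intro nn_integral_cong)
    fix s :: real
    have "(\<integral>\<^sup>+t. g s * indicator {t..} s \<partial>distr M borel Y) = g s * emeasure (distr M borel Y) {..s}"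
      by (subst nn_integral_cmult_indicator[symmetric]) (auto intro!: nn_integral_cong simp: indicator_def)
    also have "emeasure (distr M borel Y) {..s} = ennreal (cdf_of M Y s)"
      using Y by (subst emeasure_distr) (auto simp: cdf_of_def emeasure_eq_measure intro!: arg_cong[where f="measure M"])
    finally show "(\<integral>\<^sup>+t. g s * indicator {t..} s \<partial>distr M borel Y) = g s * ennreal (cdf_of M Y s)" .
  qed
  finally show ?thesis unfolding g_def .
qed

lemma nn_integral_pos_part_powr_le:
  fixes Y :: "'a \<Rightarrow> real"
  assumes Y: "random_variable borel Y" and a: "a \<ge> 1" and b: "b > 0" and C: "C \<ge> 0" and y: "y \<ge> 0"
    and FY0: "\<And>s. s < 0 \<Longrightarrow> cdf_of M Y s = 0"
    and FY: "\<And>s. 0 \<le> s \<Longrightarrow> s \<le> y \<Longrightarrow> cdf_of M Y s \<le> C * s powr b"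
  shows "(\<integral>\<^sup>+t. ennreal ((max 0 (y - t)) powr a) \<partial>distr M borel Y)
      \<le> ennreal (C * (Gamma (a+1) * Gamma (b+1) / Gamma (a+b+1)) * y powr (a+b))"
  unfolding nn_integral_pos_part_powr_eq[OF Y a]
proof (rule order.trans[OF nn_integral_mono])
  fix s :: real
  show "ennreal (indicator {..y} s * (a * (y - s) powr (a-1))) * ennreal (cdf_of M Y s)
      \<le> ennreal (indicator {0..s} s * 0 + indicator {0..y} s * (C * (a * (y - s) powr (a - 1) * s powr b)))"
  proof (cases "0 \<le> s \<and> s \<le> y")
    case True
    then have "a * (y - s) powr (a-1) * cdf_of M Y s \<le> a * (y - s) powr (a-1) * (C * s powr b)"
      using FY[of s] a by (intro mult_left_mono) auto
    then show ?thesis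
      using True a by (simp add: indicator_def ennreal_mult[symmetric] cdf_of_def mult_ac ennreal_leI)
  qed (auto simp: indicator_def FY0)
  show "(\<integral>\<^sup>+s. ennreal (indicator {0..s} s * 0 + indicator {0..y} s * (C * (a * (y - s) powr (a - 1) * s powr b))) \<partial>lborel)
      \<le> ennreal (C * (Gamma (a+1) * Gamma (b+1) / Gamma (a+b+1)) * y powr (a+b))"
    using nn_integral_Beta_kernel[OF a b y C] by simp
qed

lemma nn_integral_pos_part_powr_ge:
  fixes Y :: "'a \<Rightarrow> real"
  assumes Y: "random_variable borel Y" and a: "a \<ge> 1" and b: "b > 0" and CD: "C \<ge> 0" "D \<ge> 0"
    and \<eta>: "\<eta> \<ge> 0" and y: "y \<ge> 0"
    and FY: "\<And>s. 0 \<le> s \<Longrightarrow> s \<le> y \<Longrightarrow> C * s powr b \<le> cdf_of M Y s + D * s powr (b + \<eta>)"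
  defines "\<beta> \<equiv> Gamma (a+1) * Gamma (b+1) / Gamma (a+b+1)"
  shows "ennreal (C * \<beta> * y powr (a+b))
      \<le> (\<integral>\<^sup>+t. ennreal ((max 0 (y - t)) powr a) \<partial>distr M borel Y) + ennreal (D * \<beta> * y powr (a+b+\<eta>))"
proof -
  define w where "w s = a * (y - s) powr (a - 1) * s powr b" for s
  have "ennreal (C * \<beta> * y powr (a+b)) = (\<integral>\<^sup>+s. ennreal (indicator {0..y} s * (C * w s)) \<partial>lborel)"
    unfolding w_def \<beta>_def by (rule nn_integral_Beta_kernel[OF a b y CD(1), symmetric])
  also have "\<dots> \<le> (\<integral>\<^sup>+s. ennreal (indicator {..y} s * (a * (y - s) powr (a-1))) * ennreal (cdf_of M Y s)
         + ennreal (indicator {0..y} s * ((D * y powr \<eta>) * w s)) \<partial>lborel)"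
  proof (intro nn_integral_mono)
    fix s :: real
    show "ennreal (indicator {0..y} s * (C * w s)) \<le> ennreal (indicator {..y} s * (a * (y - s) powr (a-1))) * ennreal (cdf_of M Y s)
         + ennreal (indicator {0..y} s * ((D * y powr \<eta>) * w s))"
    proof (cases "0 \<le> s \<and> s \<le> y")
      case True
      have q: "0 \<le> a * (y - s) powr (a-1)" using a by auto
      have "s powr (b+\<eta>) \<le> s powr b * y powr \<eta>"
        using True \<eta> by (simp add: powr_add mult_left_mono powr_mono2)
      then have "C * s powr b \<le> cdf_of M Y s + D * (s powr b * y powr \<eta>)"
        using FY[of s] True CD by (smt (verit) mult_left_mono)
      then have "C * w s \<le> a * (y - s) powr (a-1) * cdf_of M Y s + (D * y powr \<eta>) * w s"
        using mult_left_mono[OF _ q] unfolding w_def by (fastforce simp: algebra_simps)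
      moreover have "0 \<le> a * (y - s) powr (a-1) * cdf_of M Y s" "0 \<le> (D * y powr \<eta>) * w s"
        using q CD True unfolding w_def by (auto simp: cdf_of_def)
      ultimately show ?thesis
        using True q by (simp add: indicator_def ennreal_mult[symmetric] cdf_of_def ennreal_plus[symmetric] ennreal_leI
            del: ennreal_plus)
    qed (auto simp: indicator_def)
  qed
  also have "\<dots> = (\<integral>\<^sup>+t. ennreal ((max 0 (y - t)) powr a) \<partial>distr M borel Y) + ennreal (D * \<beta> * y powr (a+b+\<eta>))"
  proof -
    have "(\<lambda>s. ennreal (cdf_of M Y s)) \<in> borel_measurable borel"
      using borel_measurable_emeasure_section[OF Y, of "\<lambda>x s. x \<le> s"] by (simp add: cdf_of_def emeasure_eq_measure)
    moreover have "(\<integral>\<^sup>+s. ennreal (indicator {0..y} s * ((D * y powr \<eta>) * w s)) \<partial>lborel) = ennreal (D * \<beta> * y powr (a+b+\<eta>))"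
      unfolding w_def \<beta>_def using nn_integral_Beta_kernel[OF a b y, of "D * y powr \<eta>"] CD
      by (simp add: powr_add mult_ac)
    ultimately show ?thesis
      unfolding nn_integral_pos_part_powr_eq[OF Y a] by (subst nn_integral_add) (auto simp: w_def)
  qed
  finally show ?thesis .
qed

lemma cdf_add_eq_nn_integral_cdf:
  fixes X Y :: "'a \<Rightarrow> real"
  assumes ind: "indep_var borel X borel Y"
  shows "ennreal (cdf_of M (\<lambda>\<omega>. X \<omega> + Y \<omega>) y) = (\<integral>\<^sup>+t. ennreal (cdf_of M X (y - t)) \<partial>distr M borel Y)"
proof -
  have "ennreal (cdf_of M (\<lambda>\<omega>. X \<omega> + Y \<omega>) y) = (\<integral>\<^sup>+t. emeasure M {\<omega>\<in>space M. X \<omega> + t \<le> y} \<partial>distr M borel Y)"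
    unfolding cdf_of_def emeasure_eq_measure[symmetric]
    by (rule emeasure_indep_pair_eq_nn_integral[OF ind, where P="\<lambda>x t. x + t \<le> y"]) measurable
  also have "\<dots> = (\<integral>\<^sup>+t. ennreal (cdf_of M X (y - t)) \<partial>distr M borel Y)"
  proof (intro nn_integral_cong)
    fix t
    have "{\<omega>\<in>space M. X \<omega> + t \<le> y} = {\<omega>\<in>space M. X \<omega> \<le> y - t}" by auto
    then show "emeasure M {\<omega>\<in>space M. X \<omega> + t \<le> y} = ennreal (cdf_of M X (y - t))"
      unfolding cdf_of_def by (simp add: emeasure_eq_measure)
  qed
  finally show ?thesis .
qed

lemma cdf_add_le_nn_integral_pos_part_powr:
  fixes X Y :: "'a \<Rightarrow> real"
  assumes ind: "indep_var borel X borel Y" and Ynn: "AE t in distr M borel Y. 0 \<le> t" and A: "A \<ge> 0"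
    and FX0: "\<And>u. u < 0 \<Longrightarrow> cdf_of M X u = 0"
    and FX: "\<And>u. 0 \<le> u \<Longrightarrow> u \<le> y \<Longrightarrow> cdf_of M X u \<le> A * u powr a"
  shows "ennreal (cdf_of M (\<lambda>\<omega>. X \<omega> + Y \<omega>) y)
      \<le> ennreal A * (\<integral>\<^sup>+t. ennreal ((max 0 (y - t)) powr a) \<partial>distr M borel Y)"
proof -
  have "ennreal (cdf_of M (\<lambda>\<omega>. X \<omega> + Y \<omega>) y) \<le> (\<integral>\<^sup>+t. ennreal A * ennreal ((max 0 (y - t)) powr a) \<partial>distr M borel Y)"
    unfolding cdf_add_eq_nn_integral_cdf[OF ind] using Ynn
  proof (intro nn_integral_mono_AE, eventually_elim)
    case (elim t)
    show ?case
    proof (cases "t \<le> y")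
      case True
      then have "cdf_of M X (y - t) \<le> A * (y - t) powr a" using FX[of "y - t"] elim by auto
      then show ?thesis using True A by (simp add: ennreal_mult[symmetric] ennreal_leI)
    qed (simp add: FX0)
  qed
  also have "\<dots> = ennreal A * (\<integral>\<^sup>+t. ennreal ((max 0 (y - t)) powr a) \<partial>distr M borel Y)"
    by (rule nn_integral_cmult) measurable
  finally show ?thesis .
qed

lemma nn_integral_pos_part_powr_le_cdf_add:
  fixes X Y :: "'a \<Rightarrow> real"
  assumes ind: "indep_var borel X borel Y" and Ynn: "AE t in distr M borel Y. 0 \<le> t"
    and AB: "A \<ge> 0" "B \<ge> 0" and \<eta>: "\<eta> \<ge> 0" and a: "a \<ge> 0"
    and FX: "\<And>u. 0 \<le> u \<Longrightarrow> u \<le> y \<Longrightarrow> A * u powr a \<le> cdf_of M X u + B * u powr (a + \<eta>)"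
  shows "ennreal A * (\<integral>\<^sup>+t. ennreal ((max 0 (y - t)) powr a) \<partial>distr M borel Y)
      \<le> ennreal (cdf_of M (\<lambda>\<omega>. X \<omega> + Y \<omega>) y) + ennreal (B * y powr (a + \<eta>) * cdf_of M Y y)"
proof -
  have Y: "random_variable borel Y" using ind by (rule indep_var_rv2)
  have "ennreal A * (\<integral>\<^sup>+t. ennreal ((max 0 (y - t)) powr a) \<partial>distr M borel Y)
      = (\<integral>\<^sup>+t. ennreal A * ennreal ((max 0 (y - t)) powr a) \<partial>distr M borel Y)"
    by (rule nn_integral_cmult[symmetric]) measurable
  also have "\<dots> \<le> (\<integral>\<^sup>+t. ennreal (cdf_of M X (y - t)) + ennreal (B * y powr (a + \<eta>)) * indicator {..y} t \<partial>distr M borel Y)"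
    using Ynn
  proof (intro nn_integral_mono_AE, eventually_elim)
    case (elim t)
    show ?case
    proof (cases "t \<le> y")
      case True
      have "(y - t) powr (a + \<eta>) \<le> y powr (a + \<eta>)" using elim True a \<eta> by (intro powr_mono2) auto
      then have "A * (y - t) powr a \<le> cdf_of M X (y - t) + B * y powr (a + \<eta>)"
        using FX[of "y - t"] elim True AB(2) by (smt (verit) mult_left_mono)
      then have "ennreal (A * (y - t) powr a) \<le> ennreal (cdf_of M X (y - t)) + ennreal (B * y powr (a + \<eta>))"
        using AB by (simp add: ennreal_plus[symmetric] ennreal_leI cdf_of_def del: ennreal_plus)
      then show ?thesis using True AB by (simp add: ennreal_mult[symmetric])
    qed simp
  qed
  also have "\<dots> = ennreal (cdf_of M (\<lambda>\<omega>. X \<omega> + Y \<omega>) y) + ennreal (B * y powr (a + \<eta>)) * emeasure (distr M borel Y) {..y}"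
  proof -
    have "(\<lambda>t. ennreal (cdf_of M X (y - t))) \<in> borel_measurable borel"
      using borel_measurable_emeasure_section[OF indep_var_rv1[OF ind], of "\<lambda>x t. x + t \<le> y"]
      by (simp add: cdf_of_def emeasure_eq_measure le_diff_eq)
    then show ?thesis
      unfolding cdf_add_eq_nn_integral_cdf[OF ind] by (subst nn_integral_add) (auto simp: nn_integral_cmult_indicator)
  qed
  also have "emeasure (distr M borel Y) {..y} = ennreal (cdf_of M Y y)"
    using Y by (subst emeasure_distr) (auto simp: cdf_of_def emeasure_eq_measure intro!: arg_cong[where f="measure M"])
  finally show ?thesis
    using AB by (simp add: ennreal_mult cdf_of_def)
qed

lemma cdf_add_power_bounds:
  fixes X Y :: "'a \<Rightarrow> real"
  assumes ind: "indep_var borel X borel Y" and Ynn: "AE t in distr M borel Y. 0 \<le> t"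
    and a: "a \<ge> 1" and b: "b > 0" and \<eta>: "\<eta> > 0" and A: "A \<ge> 0" and B: "B \<ge> 0" and C: "C \<ge> 0" and D: "D \<ge> 0"
    and FX0: "\<And>u. u \<le> 0 \<Longrightarrow> cdf_of M X u = 0" and FY0: "\<And>u. u \<le> 0 \<Longrightarrow> cdf_of M Y u = 0"
    and FX: "\<And>u. u \<in> {0..1} \<Longrightarrow> cdf_of M X u \<le> A * u powr a \<and> A * u powr a \<le> cdf_of M X u + B * u powr (a + \<eta>)"
    and FY: "\<And>u. u \<in> {0..1} \<Longrightarrow> cdf_of M Y u \<le> C * u powr b \<and> C * u powr b \<le> cdf_of M Y u + D * u powr (b + \<eta>)"
    and y: "y \<in> {0..1}"
  defines "\<beta> \<equiv> Gamma (a+1) * Gamma (b+1) / Gamma (a+b+1)"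
  shows "cdf_of M (\<lambda>\<omega>. X \<omega> + Y \<omega>) y \<le> A * C * \<beta> * y powr (a + b)"
    and "A * C * \<beta> * y powr (a + b) \<le> cdf_of M (\<lambda>\<omega>. X \<omega> + Y \<omega>) y + (B * C + A * D * \<beta>) * y powr (a + b + \<eta>)"
proof -
  have Y: "random_variable borel Y" using ind by (rule indep_var_rv2)
  have \<beta>: "\<beta> \<ge> 0" unfolding \<beta>_def using a b by simp
  define J where "J = (\<integral>\<^sup>+t. ennreal ((max 0 (y - t)) powr a) \<partial>distr M borel Y)"
  have J_le: "J \<le> ennreal (C * \<beta> * y powr (a+b))"
    unfolding J_def \<beta>_def using y FY FY0
    by (intro nn_integral_pos_part_powr_le[OF Y a b C]) auto
  then obtain Jr where Jr: "J = ennreal Jr" "Jr \<ge> 0"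
    by (cases J rule: ennreal_cases) (auto simp: top_unique)
  have J_ge: "ennreal (C * \<beta> * y powr (a+b)) \<le> J + ennreal (D * \<beta> * y powr (a+b+\<eta>))"
    unfolding J_def \<beta>_def using y FY \<eta>
    by (intro nn_integral_pos_part_powr_ge[OF Y a b C D]) auto
  have cdf_le: "ennreal (cdf_of M (\<lambda>\<omega>. X \<omega> + Y \<omega>) y) \<le> ennreal A * J"
    unfolding J_def using y FX FX0
    by (intro cdf_add_le_nn_integral_pos_part_powr[OF ind Ynn A]) auto
  have cdf_ge: "ennreal A * J \<le> ennreal (cdf_of M (\<lambda>\<omega>. X \<omega> + Y \<omega>) y) + ennreal (B * y powr (a + \<eta>) * cdf_of M Y y)"
    unfolding J_def using y FX \<eta> a
    by (intro nn_integral_pos_part_powr_le_cdf_add[OF ind Ynn A B]) auto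
  have nn: "0 \<le> cdf_of M (\<lambda>\<omega>. X \<omega> + Y \<omega>) y" "0 \<le> cdf_of M Y y"
    by (simp_all add: cdf_of_def)
  have Jr_le: "Jr \<le> C * \<beta> * y powr (a+b)"
    using J_le C \<beta> by (simp add: Jr)
  have Jr_ge: "C * \<beta> * y powr (a+b) \<le> Jr + D * \<beta> * y powr (a+b+\<eta>)"
    using J_ge C D \<beta> Jr by (simp add: ennreal_plus[symmetric] del: ennreal_plus)
  have cdf_le': "cdf_of M (\<lambda>\<omega>. X \<omega> + Y \<omega>) y \<le> A * Jr"
    using cdf_le A Jr by (simp add: ennreal_mult[symmetric])
  have cdf_ge': "A * Jr \<le> cdf_of M (\<lambda>\<omega>. X \<omega> + Y \<omega>) y + B * y powr (a + \<eta>) * cdf_of M Y y"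
    using cdf_ge A B Jr nn by (simp add: ennreal_mult[symmetric] ennreal_plus[symmetric] del: ennreal_plus)
  show "cdf_of M (\<lambda>\<omega>. X \<omega> + Y \<omega>) y \<le> A * C * \<beta> * y powr (a + b)"
    using cdf_le' mult_left_mono[OF Jr_le A] by (simp add: mult_ac)
  have "A * C * \<beta> * y powr (a + b) \<le> A * Jr + A * D * \<beta> * y powr (a+b+\<eta>)"
    using mult_left_mono[OF Jr_ge A] by (simp add: algebra_simps)
  also have "\<dots> \<le> cdf_of M (\<lambda>\<omega>. X \<omega> + Y \<omega>) y + B * y powr (a + \<eta>) * (C * y powr b) + A * D * \<beta> * y powr (a+b+\<eta>)"
    using cdf_ge' mult_left_mono[of "cdf_of M Y y" "C * y powr b" "B * y powr (a + \<eta>)"] FY[OF y] B by simp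
  also have "\<dots> = cdf_of M (\<lambda>\<omega>. X \<omega> + Y \<omega>) y + (B * C + A * D * \<beta>) * y powr (a + b + \<eta>)"
    by (simp add: algebra_simps powr_add[symmetric])
  finally show "A * C * \<beta> * y powr (a + b) \<le> cdf_of M (\<lambda>\<omega>. X \<omega> + Y \<omega>) y + (B * C + A * D * \<beta>) * y powr (a + b + \<eta>)" .
qed

lemma cdf_sandwich_add:
  fixes X Y :: "'a \<Rightarrow> real"
  assumes ind: "indep_var borel X borel Y"
    and SX: "cdf_sandwich M X A a \<eta>" and SY: "cdf_sandwich M Y C b \<eta>"
    and a: "a \<ge> 1" and b: "b > 0" and \<eta>: "\<eta> > 0"
  shows "cdf_sandwich M (\<lambda>\<omega>. X \<omega> + Y \<omega>) (A * C * (Gamma (a+1) * Gamma (b+1) / Gamma (a+b+1))) (a + b) \<eta>"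
proof -
  have X: "random_variable borel X" and Y: "random_variable borel Y"
    using ind by (rule indep_var_rv1, rule indep_var_rv2)
  obtain B where B: "B \<ge> 0" and FX: "\<And>u. u \<in> {0..1} \<Longrightarrow>
      cdf_of M X u \<le> A * u powr a \<and> A * u powr a \<le> cdf_of M X u + B * u powr (a + \<eta>)"
    using SX unfolding cdf_sandwich_def by blast
  obtain D where D: "D \<ge> 0" and FY: "\<And>u. u \<in> {0..1} \<Longrightarrow>
      cdf_of M Y u \<le> C * u powr b \<and> C * u powr b \<le> cdf_of M Y u + D * u powr (b + \<eta>)"
    using SY unfolding cdf_sandwich_def by blast
  have A: "A \<ge> 0" using SX by (rule cdf_sandwich_coeff_nonneg)
  have C: "C \<ge> 0" using SY by (rule cdf_sandwich_coeff_nonneg)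
  note bounds = cdf_add_power_bounds[OF ind cdf_sandwich_AE_nonneg[OF SY Y] a b \<eta> A B C D
      cdf_sandwich_cdf_nonpos[OF SX X] cdf_sandwich_cdf_nonpos[OF SY Y] FX FY]
  show ?thesis
    unfolding cdf_sandwich_def
    using bounds A B C D a b
    by (intro exI[of _ "B * C + A * D * (Gamma (a+1) * Gamma (b+1) / Gamma (a+b+1))"]) auto
qed

lemma cdf_sandwich_sum:
  fixes Z :: "nat \<Rightarrow> 'a \<Rightarrow> real"
  assumes K: "K \<ge> 1" and indep: "indep_vars (\<lambda>_. borel) Z {1..K}" and a: "a \<ge> 1" and \<eta>: "\<eta> > 0"
    and SZ: "\<And>k. k \<in> {1..K} \<Longrightarrow> cdf_sandwich M (Z k) A a \<eta>"
  shows "cdf_sandwich M (\<lambda>\<omega>. \<Sum>k\<in>{1..K}. Z k \<omega>) ((A * Gamma (a+1)) ^ K / Gamma (a * real K + 1)) (a * real K) \<eta>"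
  using K indep SZ
proof (induction K rule: dec_induct)
  case base
  have "Gamma (a + 1) > 0" using a by simp
  then show ?case using base.prems(2)[of 1] by simp
next
  case (step n)
  have "indep_vars (\<lambda>_. borel) Z {1..n}"
    using step.prems(1) by (rule indep_vars_subset) auto
  then have IH: "cdf_sandwich M (\<lambda>\<omega>. \<Sum>k\<in>{1..n}. Z k \<omega>) ((A * Gamma (a+1)) ^ n / Gamma (a * real n + 1)) (a * real n) \<eta>"
    using step.IH step.prems(2) by simp
  have "{1..Suc n} = insert (Suc n) {1..n}" by auto
  then have indv: "indep_var borel (Z (Suc n)) borel (\<lambda>\<omega>. \<Sum>k\<in>{1..n}. Z k \<omega>)"
    and sum_eq: "(\<lambda>\<omega>. \<Sum>k\<in>{1..Suc n}. Z k \<omega>) = (\<lambda>\<omega>. Z (Suc n) \<omega> + (\<Sum>k\<in>{1..n}. Z k \<omega>))"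
    using step.prems(1) by (auto intro!: indep_vars_sum simp: add.commute)
  have n: "a * real n > 0" using a step.hyps by simp
  have "Gamma (a * real n + 1) > 0" by (rule Gamma_real_pos) (use n in simp)
  then have "Gamma (a * real n + 1) \<noteq> 0" by linarith
  then have const: "A * ((A * Gamma (a+1)) ^ n / Gamma (a * real n + 1))
        * (Gamma (a+1) * Gamma (a * real n + 1) / Gamma (a + a * real n + 1))
      = (A * Gamma (a+1)) ^ Suc n / Gamma (a + a * real n + 1)"
    by (simp add: field_simps)
  have "a * real (Suc n) = a + a * real n" by (simp add: algebra_simps)
  moreover have "cdf_sandwich M (\<lambda>\<omega>. Z (Suc n) \<omega> + (\<Sum>k\<in>{1..n}. Z k \<omega>))
      ((A * Gamma (a+1)) ^ Suc n / Gamma (a + a * real n + 1)) (a + a * real n) \<eta>"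
    using cdf_sandwich_add[OF indv step.prems(2)[of "Suc n"] IH a n \<eta>] step.hyps unfolding const by simp
  ultimately show ?case
    unfolding sum_eq by simp
qed

end

section \<open>Order statistics\<close>

lemma sort_nth_le_iff:
  fixes xs :: "'a :: linorder list"
  assumes i: "i < length xs"
  shows "sort xs ! i \<le> y \<longleftrightarrow> i < length (filter (\<lambda>x. x \<le> y) xs)"
proof -
  define s where "s = sort xs"
  have srt: "sorted s" unfolding s_def by simp
  have len: "length s = length xs" unfolding s_def by simp
  have lf: "length (filter (\<lambda>x. x \<le> y) xs) = length (filter (\<lambda>x. x \<le> y) s)"
    unfolding s_def by (metis mset_filter mset_sort size_mset)
  have c: "length (filter (\<lambda>x. x \<le> y) s) = card {j. j < length s \<and> s ! j \<le> y}"
    by (rule length_filter_conv_card)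
  show ?thesis unfolding s_def[symmetric] lf c
  proof
    assume h: "s ! i \<le> y"
    have "{0..i} \<subseteq> {j. j < length s \<and> s ! j \<le> y}"
    proof
      fix j assume "j \<in> {0..i}"
      then have "j \<le> i" by simp
      then have "s ! j \<le> s ! i" using srt i len by (intro sorted_nth_mono) auto
      then show "j \<in> {j. j < length s \<and> s ! j \<le> y}" using h \<open>j \<le> i\<close> i len by auto
    qed
    then have "card {0..i} \<le> card {j. j < length s \<and> s ! j \<le> y}" by (intro card_mono) auto
    then show "i < card {j. j < length s \<and> s ! j \<le> y}" by simp
  next
    assume h: "i < card {j. j < length s \<and> s ! j \<le> y}"
    show "s ! i \<le> y"
    proof (rule ccontr)
      assume "\<not> s ! i \<le> y"
      then have "{j. j < length s \<and> s ! j \<le> y} \<subseteq> {0..<i}"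
      proof (intro subsetI)
        fix j assume j: "j \<in> {j. j < length s \<and> s ! j \<le> y}"
        show "j \<in> {0..<i}"
        proof (rule ccontr)
          assume "j \<notin> {0..<i}"
          then have "i \<le> j" by simp
          then have "s ! i \<le> s ! j" using srt j by (intro sorted_nth_mono) auto
          with j \<open>\<not> s ! i \<le> y\<close> show False by auto
        qed
      qed
      then have "card {j. j < length s \<and> s ! j \<le> y} \<le> card {0..<i}" by (intro card_mono) auto
      with h show False by simp
    qed
  qed
qed

lemma ord_stat_le_iff:
  assumes n: "1 \<le> n" "n \<le> N"
  shows "ord_stat N X n \<omega> \<le> y \<longleftrightarrow> n \<le> card {j\<in>{1..N}. X j \<omega> \<le> y}"
proof -
  have "ord_stat N X n \<omega> \<le> y \<longleftrightarrow> n - 1 < length (filter (\<lambda>x. x \<le> y) (map (\<lambda>i. X i \<omega>) [1..<N+1]))"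
    unfolding ord_stat_def using n by (intro sort_nth_le_iff) auto
  also have "length (filter (\<lambda>x. x \<le> y) (map (\<lambda>i. X i \<omega>) [1..<N+1])) = card {j\<in>{1..N}. X j \<omega> \<le> y}"
  proof -
    have "length (filter (\<lambda>x. x \<le> y) (map (\<lambda>i. X i \<omega>) [1..<N+1])) = length (filter (\<lambda>i. X i \<omega> \<le> y) [1..<N+1])"
      by (simp add: filter_map comp_def)
    also have "\<dots> = card (set (filter (\<lambda>i. X i \<omega> \<le> y) [1..<N+1]))"
      by (rule distinct_card[symmetric]) simp
    also have "set (filter (\<lambda>i. X i \<omega> \<le> y) [1..<N+1]) = {j\<in>{1..N}. X j \<omega> \<le> y}" by auto
    finally show ?thesis .
  qed
  finally show ?thesis using n by auto
qed

lemma ord_stat_mono: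
  assumes le: "\<And>j. X j \<omega> \<le> Y j \<omega>" and n: "1 \<le> n" "n \<le> N"
  shows "ord_stat N X n \<omega> \<le> ord_stat N Y n \<omega>"
proof -
  define y where "y = ord_stat N Y n \<omega>"
  have "n \<le> card {j\<in>{1..N}. Y j \<omega> \<le> y}" using ord_stat_le_iff[OF n, of Y \<omega> y] unfolding y_def by simp
  also have "\<dots> \<le> card {j\<in>{1..N}. X j \<omega> \<le> y}"
    by (intro card_mono) (auto intro: order.trans[OF le])
  finally show ?thesis using ord_stat_le_iff[OF n, of X \<omega> y] unfolding y_def by simp
qed

context prob_space
begin

lemma le_set_event_eq_INT:
  fixes V :: "nat \<Rightarrow> 'a \<Rightarrow> real"
  assumes "S \<subseteq> I" "I \<noteq> {}"
  shows "{\<omega>\<in>space M. {j\<in>I. V j \<omega> \<le> y} = S}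
       = (\<Inter>j\<in>I. V j -` (if j \<in> S then {..y} else {y<..}) \<inter> space M)"
  using assms by (auto split: if_splits)

lemma prob_le_set_eq:
  fixes V :: "nat \<Rightarrow> 'a \<Rightarrow> real"
  assumes I: "finite I" "I \<noteq> {}" and indep: "indep_vars (\<lambda>_. borel) V I" and S: "S \<subseteq> I"
  shows "prob {\<omega>\<in>space M. {j\<in>I. V j \<omega> \<le> y} = S}
       = (\<Prod>j\<in>S. cdf_of M (V j) y) * (\<Prod>j\<in>I - S. 1 - cdf_of M (V j) y)"
proof -
  have V: "\<And>j. j \<in> I \<Longrightarrow> random_variable borel (V j)" using indep unfolding indep_vars_def by auto
  have "prob {\<omega>\<in>space M. {j\<in>I. V j \<omega> \<le> y} = S}
      = (\<Prod>j\<in>I. prob (V j -` (if j \<in> S then {..y} else {y<..}) \<inter> space M))"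
    unfolding le_set_event_eq_INT[OF S I(2)] using I by (intro indep_varsD[OF indep]) auto
  also have "\<dots> = (\<Prod>j\<in>I. if j \<in> S then cdf_of M (V j) y else 1 - cdf_of M (V j) y)"
  proof (intro prod.cong refl)
    fix j assume j: "j \<in> I"
    have "V j -` {..y} \<inter> space M = {\<omega>\<in>space M. V j \<omega> \<le> y}"
      and "V j -` {y<..} \<inter> space M = space M - {\<omega>\<in>space M. V j \<omega> \<le> y}" by auto
    moreover have "{\<omega>\<in>space M. V j \<omega> \<le> y} \<in> events" using V[OF j] by measurable
    ultimately show "prob (V j -` (if j \<in> S then {..y} else {y<..}) \<inter> space M)
        = (if j \<in> S then cdf_of M (V j) y else 1 - cdf_of M (V j) y)"
      unfolding cdf_of_def by (auto simp: prob_compl)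
  qed
  also have "\<dots> = (\<Prod>j\<in>S. cdf_of M (V j) y) * (\<Prod>j\<in>I - S. 1 - cdf_of M (V j) y)"
    using I S by (simp add: prod.If_cases Int_absorb1 Diff_eq)
  finally show ?thesis .
qed

lemma cdf_ord_stat_eq_sum_subsets:
  fixes V :: "nat \<Rightarrow> 'a \<Rightarrow> real"
  assumes indep: "indep_vars (\<lambda>_. borel) V {1..N}" and n: "1 \<le> n" "n \<le> N"
  shows "cdf_of M (ord_stat N V n) y =
    (\<Sum>S\<in>{S. S \<subseteq> {1..N} \<and> n \<le> card S}. (\<Prod>j\<in>S. cdf_of M (V j) y) * (\<Prod>j\<in>{1..N} - S. 1 - cdf_of M (V j) y))"
proof -
  define \<S> where "\<S> = {S. S \<subseteq> {1..N} \<and> n \<le> card S}"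
  define E where "E S = {\<omega>\<in>space M. {j\<in>{1..N}. V j \<omega> \<le> y} = S}" for S
  have V: "\<And>j. j \<in> {1..N} \<Longrightarrow> random_variable borel (V j)" using indep unfolding indep_vars_def by auto
  have "{\<omega>\<in>space M. ord_stat N V n \<omega> \<le> y} = {\<omega>\<in>space M. n \<le> card {j\<in>{1..N}. V j \<omega> \<le> y}}"
    by (simp add: ord_stat_le_iff[OF n])
  also have "\<dots> = (\<Union>S\<in>\<S>. E S)"
    unfolding \<S>_def E_def by auto
  finally have union: "{\<omega>\<in>space M. ord_stat N V n \<omega> \<le> y} = (\<Union>S\<in>\<S>. E S)" .
  have events: "E S \<in> events" if "S \<in> \<S>" for S
  proof -
    have "S \<subseteq> {1..N}" "{1..N} \<noteq> {}" using that n by (auto simp: \<S>_def)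
    then show ?thesis
      unfolding E_def le_set_event_eq_INT[OF \<open>S \<subseteq> {1..N}\<close> \<open>{1..N} \<noteq> {}\<close>] using V
      by (intro sets.finite_INT) (auto intro: measurable_sets)
  qed
  have "cdf_of M (ord_stat N V n) y = (\<Sum>S\<in>\<S>. prob (E S))"
    unfolding cdf_of_def union using events
    by (intro finite_measure_finite_Union) (auto simp: \<S>_def disjoint_family_on_def E_def)
  also have "\<dots> = (\<Sum>S\<in>\<S>. (\<Prod>j\<in>S. cdf_of M (V j) y) * (\<Prod>j\<in>{1..N} - S. 1 - cdf_of M (V j) y))"
    unfolding E_def \<S>_def using n by (intro sum.cong refl prob_le_set_eq[OF _ _ indep]) auto
  finally show ?thesis unfolding \<S>_def .
qed

lemma cdf_ord_stat_asymp_equiv: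
  fixes V :: "nat \<Rightarrow> 'a \<Rightarrow> real"
  assumes indep: "indep_vars (\<lambda>_. borel) V {1..N}" and n: "1 \<le> n" "n \<le> N"
    and \<alpha>: "2 * ms * real K > 0" and \<xi>: "\<xi> > 0"
    and V: "\<And>j. j \<in> {1..N} \<Longrightarrow> cdf_of M (V j) \<sim>[at_right 0] (\<lambda>y. \<xi> * y powr (2 * ms * real K))"
  shows "cdf_of M (ord_stat N V n) \<sim>[at_right 0] asym_cdf N n K ms \<xi>"
proof -
  have "cdf_of M (ord_stat N V n) \<sim>[at_right 0] (\<lambda>y. real (N choose n) * \<xi> ^ n * y powr (2 * ms * real K * real n))"
    unfolding cdf_ord_stat_eq_sum_subsets[OF indep n, abs_def]
    using poisson_binomial_tail_asymp_equiv[of "{1..N}" n \<xi> "2 * ms * real K" "\<lambda>j. cdf_of M (V j)"] n \<alpha> \<xi> V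
    by simp
  also have "(\<lambda>y. real (N choose n) * \<xi> ^ n * y powr (2 * ms * real K * real n)) \<sim>[at_right 0] asym_cdf N n K ms \<xi>"
    by (rule asymp_equiv_symI[OF asym_cdf_asymp_equiv[OF n \<alpha> \<xi>]])
  finally show ?thesis .
qed

lemma cdf_ord_stat_le_of_le:
  assumes le: "\<And>j \<omega>. X j \<omega> \<le> Y j \<omega>" and n: "1 \<le> n" "n \<le> N"
    and X: "\<And>j. j \<in> {1..N} \<Longrightarrow> random_variable borel (X j)"
  shows "cdf_of M (ord_stat N Y n) y \<le> cdf_of M (ord_stat N X n) y"
  unfolding cdf_of_def
proof (rule finite_measure_mono)
  show "{\<omega>\<in>space M. ord_stat N Y n \<omega> \<le> y} \<subseteq> {\<omega>\<in>space M. ord_stat N X n \<omega> \<le> y}"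
    using ord_stat_mono[OF _ n, of X _ Y] le by (auto intro: order.trans)
  have "{\<omega>\<in>space M. ord_stat N X n \<omega> \<le> y} = {\<omega>\<in>space M. n \<le> card {j\<in>{1..N}. X j \<omega> \<le> y}}"
    by (simp add: ord_stat_le_iff[OF n])
  also have "\<dots> = {\<omega>\<in>space M. real n \<le> (\<Sum>j\<in>{1..N}. if X j \<omega> \<le> y then 1 else 0)}"
    by (simp add: sum.If_cases Int_def)
  also have "\<dots> \<in> events"
    using X by measurable
  finally show "{\<omega>\<in>space M. ord_stat N X n \<omega> \<le> y} \<in> events" .
qed

end

section \<open>Quantised phases\<close>

lemma abs_phase_err_le: "\<bar>phase_err b th G g k n \<omega>\<bar> \<le> pi / 2 ^ b"
proof -
  define t where "t = phase_bar th G g k n \<omega> / qstep b"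
  have q: "qstep b > 0" by (simp add: qstep_def)
  then have "phase_err b th G g k n \<omega> = qstep b * (of_int \<lfloor>t\<rfloor> + 1/2 - t)"
    by (simp add: phase_err_def phase_hat_def t_def algebra_simps)
  moreover have "\<bar>of_int \<lfloor>t\<rfloor> + 1/2 - t\<bar> \<le> 1/2" by linarith
  ultimately have "\<bar>phase_err b th G g k n \<omega>\<bar> \<le> qstep b * (1/2)"
    using q by (simp add: abs_mult)
  then show ?thesis by (simp add: qstep_def)
qed

lemma cos_quant_le_cos_phase_err: "cos (pi / 2 ^ b) \<le> cos (phase_err b th G g k n \<omega>)"
proof -
  have p: "pi / 2 ^ b \<le> pi" by (simp add: field_simps)
  have "cos (phase_err b th G g k n \<omega>) = cos \<bar>phase_err b th G g k n \<omega>\<bar>" by simp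
  moreover have "cos (pi / 2 ^ b) \<le> cos \<bar>phase_err b th G g k n \<omega>\<bar>"
    using abs_phase_err_le[of b th G g k n \<omega>] p by (intro cos_monotone_0_pi_le) auto
  ultimately show ?thesis by simp
qed

lemma cos_quant_pos:
  assumes "b \<ge> 2"
  shows "cos (pi / 2 ^ b) > 0"
proof (rule cos_gt_zero_pi)
  have "pi / 2 ^ b \<le> pi / 4"
    using assms power_increasing[of 2 b "2::real"] by (intro divide_left_mono) auto
  then show "pi / 2 ^ b < pi / 2" using pi_gt_zero by linarith
  show "- (pi / 2) < pi / 2 ^ b" using pi_gt_zero by (smt (verit) divide_pos_pos zero_less_power)
qed

lemma L_low_le_Y_disc:
  assumes beta: "\<beta> \<ge> 0"
  shows "L_low K b \<beta> G g n \<omega> \<le> Y_disc K b \<beta> th G g n \<omega>"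
proof -
  define r where "r k = cmod (G k n \<omega>) * cmod (g k n \<omega>)" for k
  define e where "e k = phase_err b th G g k n \<omega>" for k
  have r0: "r k \<ge> 0" for k unfolding r_def by simp
  have "cos (pi / 2 ^ b) * (\<Sum>k=1..K. r k) = (\<Sum>k=1..K. r k * cos (pi / 2 ^ b))"
    by (simp add: sum_distrib_right mult.commute)
  also have "\<dots> \<le> (\<Sum>k=1..K. r k * cos (e k))"
    unfolding e_def using cos_quant_le_cos_phase_err r0 by (intro sum_mono mult_left_mono) auto
  also have "\<dots> = Re (\<Sum>k=1..K. complex_of_real (r k) * cis (e k))"
    by (simp add: Re_sum)
  also have "\<dots> \<le> cmod (\<Sum>k=1..K. complex_of_real (r k) * cis (e k))"
    by (rule complex_Re_le_cmod)
  finally have "cos (pi / 2 ^ b) * (\<Sum>k=1..K. r k) \<le> cmod (\<Sum>k=1..K. complex_of_real (r k) * cis (e k))" .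
  then have "\<beta> * (cos (pi / 2 ^ b) * (\<Sum>k=1..K. r k)) \<le> \<beta> * cmod (\<Sum>k=1..K. complex_of_real (r k) * cis (e k))"
    using beta by (intro mult_left_mono) auto
  then show ?thesis unfolding L_low_def Y_disc_def r_def e_def by (simp add: mult_ac)
qed

section \<open>The cascaded Nakagami channel\<close>

context prob_space
begin

lemma indep_var_compose_components:
  fixes X :: "'i \<Rightarrow> 'a \<Rightarrow> complex"
  assumes ind: "indep_vars (\<lambda>_. borel) X I" and i: "i1 \<in> I" "i2 \<in> I" "i1 \<noteq> i2"
    and h: "h1 \<in> borel_measurable borel" "h2 \<in> borel_measurable borel"
  shows "indep_var borel (\<lambda>\<omega>. h1 (X i1 \<omega>)) borel (\<lambda>\<omega>. h2 (X i2 \<omega>))"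
proof -
  have r: "indep_var (PiM {i1} (\<lambda>_. borel)) (\<lambda>\<omega>. restrict (\<lambda>i. X i \<omega>) {i1}) (PiM {i2} (\<lambda>_. borel)) (\<lambda>\<omega>. restrict (\<lambda>i. X i \<omega>) {i2})"
    using i by (intro indep_var_restrict[OF ind]) auto
  have m1: "(\<lambda>f. h1 (f i1)) \<in> measurable (PiM {i1} (\<lambda>_. borel)) borel"
    using measurable_compose[OF measurable_component_singleton[of i1 "{i1}" "\<lambda>_. borel"] h(1)] by simp
  have m2: "(\<lambda>f. h2 (f i2)) \<in> measurable (PiM {i2} (\<lambda>_. borel)) borel"
    using measurable_compose[OF measurable_component_singleton[of i2 "{i2}" "\<lambda>_. borel"] h(2)] by simp
  from indep_var_compose[OF r m1 m2] show ?thesis by (simp add: comp_def)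
qed

lemma indep_vars_compose_blocks:
  fixes X :: "'i \<Rightarrow> 'a \<Rightarrow> complex" and f :: "'l \<Rightarrow> 'a \<Rightarrow> real"
  assumes ind: "indep_vars (\<lambda>_. borel) X I" and sub: "\<And>l. l \<in> L \<Longrightarrow> Kf l \<subseteq> I"
    and dis: "disjoint_family_on Kf L"
    and \<Phi>: "\<And>l. l \<in> L \<Longrightarrow> \<Phi> l \<in> borel_measurable (PiM (Kf l) (\<lambda>_. borel))"
    and f: "\<And>l \<omega>. l \<in> L \<Longrightarrow> f l \<omega> = \<Phi> l (restrict (\<lambda>i. X i \<omega>) (Kf l))"
  shows "indep_vars (\<lambda>_. borel) f L"
proof -
  have "indep_vars (\<lambda>l. PiM (Kf l) (\<lambda>_. borel)) (\<lambda>l \<omega>. restrict (\<lambda>i. X i \<omega>) (Kf l)) L"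
    by (rule indep_vars_restrict[OF ind sub dis])
  from indep_vars_compose2[OF this \<Phi>]
  have "indep_vars (\<lambda>_. borel) (\<lambda>l \<omega>. \<Phi> l (restrict (\<lambda>i. X i \<omega>) (Kf l))) L" .
  then show ?thesis by (subst indep_vars_cong[OF refl _ refl]) (auto simp: f fun_eq_iff)
qed


end

lemma measurable_component_PiM_borel:
  "i \<in> J \<Longrightarrow> (\<lambda>h. h i) \<in> measurable (PiM J (\<lambda>_. borel)) (borel :: complex measure)"
  using measurable_component_singleton[of i J "\<lambda>_. borel"] by simp

locale nakagami_cascade = prob_space M for M :: "'a measure" +
  fixes N K :: nat and mG mg :: real and G g :: "nat \<Rightarrow> nat \<Rightarrow> 'a \<Rightarrow> complex"
  assumes K: "K \<ge> 1"
    and indep: "indep_vars (\<lambda>_. borel) (\<lambda>(c, k, j). if c then G k j else g k j) (UNIV \<times> {1..K} \<times> {1..N})"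
    and nakagami_G: "\<And>k j. k \<in> {1..K} \<Longrightarrow> j \<in> {1..N} \<Longrightarrow>
      distributed M lborel (\<lambda>\<omega>. cmod (G k j \<omega>)) (\<lambda>x. ennreal (nakagami_pdf mG x))"
    and nakagami_g: "\<And>k j. k \<in> {1..K} \<Longrightarrow> j \<in> {1..N} \<Longrightarrow>
      distributed M lborel (\<lambda>\<omega>. cmod (g k j \<omega>)) (\<lambda>x. ennreal (nakagami_pdf mg x))"
    and m: "1/2 \<le> mG" "1/2 \<le> mg" "mG \<noteq> mg"
begin

abbreviation ms where "ms \<equiv> min mG mg"
abbreviation ml where "ml \<equiv> max mG mg"

definition gain :: "nat \<Rightarrow> 'a \<Rightarrow> real" where
  "gain j \<omega> = (\<Sum>k\<in>{1..K}. cmod (G k j \<omega>) * cmod (g k j \<omega>))"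

lemma measurable_channels:
  assumes "k \<in> {1..K}" "j \<in> {1..N}"
  shows "G k j \<in> borel_measurable M" "g k j \<in> borel_measurable M"
proof -
  have "random_variable borel (if c then G k j else g k j)" for c
    using indep assms unfolding indep_vars_def by auto
  from this[of True] this[of False] show "G k j \<in> borel_measurable M" "g k j \<in> borel_measurable M"
    by simp_all
qed

lemma measurable_gain:
  assumes j: "j \<in> {1..N}"
  shows "gain j \<in> borel_measurable M"
  unfolding gain_def
proof (intro borel_measurable_sum)
  fix k assume "k \<in> {1..K}"
  note [measurable] = measurable_channels[OF this j]
  show "(\<lambda>\<omega>. cmod (G k j \<omega>) * cmod (g k j \<omega>)) \<in> borel_measurable M" by measurable
qed

lemma indep_var_factors:
  assumes "k \<in> {1..K}" "j \<in> {1..N}"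
  shows "indep_var borel (\<lambda>\<omega>. cmod (G k j \<omega>)) borel (\<lambda>\<omega>. cmod (g k j \<omega>))"
    and "indep_var borel (\<lambda>\<omega>. cmod (g k j \<omega>)) borel (\<lambda>\<omega>. cmod (G k j \<omega>))"
  using indep_var_compose_components[OF indep, of "(True, k, j)" "(False, k, j)" cmod cmod]
    indep_var_compose_components[OF indep, of "(False, k, j)" "(True, k, j)" cmod cmod] assms
  by auto

lemma cdf_sandwich_factor_product:
  assumes "k \<in> {1..K}" "j \<in> {1..N}"
  shows "cdf_sandwich M (\<lambda>\<omega>. cmod (G k j \<omega>) * cmod (g k j \<omega>))
      (phi_const ms ml / Gamma (2 * ms + 1)) (2 * ms) (min 2 (ml - ms))"
proof (cases "mG < mg")
  case True
  then show ?thesis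
    using cdf_sandwich_nakagami_product[OF nakagami_G[OF assms] nakagami_g[OF assms] indep_var_factors(1)[OF assms]] m
    by simp
next
  case False
  with m have "mg < mG" by simp
  then show ?thesis
    using cdf_sandwich_nakagami_product[OF nakagami_g[OF assms] nakagami_G[OF assms] indep_var_factors(2)[OF assms]] m
    by (simp add: mult.commute)
qed

lemma indep_vars_factor_products:
  assumes j: "j \<in> {1..N}"
  shows "indep_vars (\<lambda>_. borel) (\<lambda>k \<omega>. cmod (G k j \<omega>) * cmod (g k j \<omega>)) {1..K}"
proof (rule indep_vars_compose_blocks[OF indep, where Kf="\<lambda>k. {(True,k,j),(False,k,j)}"
      and \<Phi>="\<lambda>k h. cmod (h (True,k,j)) * cmod (h (False,k,j))"])
  show "disjoint_family_on (\<lambda>k. {(True,k,j),(False,k,j)}) {1..K}"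
    unfolding disjoint_family_on_def by auto
  fix k assume "k \<in> {1..K}"
  note [measurable] = measurable_component_PiM_borel[of "(True,k,j)" "{(True,k,j),(False,k,j)}"]
    measurable_component_PiM_borel[of "(False,k,j)" "{(True,k,j),(False,k,j)}"]
  show "(\<lambda>h. cmod (h (True,k,j)) * cmod (h (False,k,j))) \<in> borel_measurable (PiM {(True,k,j),(False,k,j)} (\<lambda>_. borel))"
    by measurable
qed (use j in auto)

lemma indep_vars_scaled_gains:
  "indep_vars (\<lambda>_. borel) (\<lambda>j \<omega>. c * gain j \<omega>) {1..N}"
proof (rule indep_vars_compose_blocks[OF indep, where Kf="\<lambda>j. UNIV \<times> {1..K} \<times> {j}"
      and \<Phi>="\<lambda>j h. c * (\<Sum>k\<in>{1..K}. cmod (h (True,k,j)) * cmod (h (False,k,j)))"])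
  show "disjoint_family_on (\<lambda>j. UNIV \<times> {1..K} \<times> {j}) {1..N}"
    unfolding disjoint_family_on_def by auto
  fix j assume j: "j \<in> {1..N}"
  have "(\<lambda>h. cmod (h (True,k,j)) * cmod (h (False,k,j))) \<in> borel_measurable (PiM (UNIV \<times> {1..K} \<times> {j}) (\<lambda>_. borel))"
    if "k \<in> {1..K}" for k
  proof -
    have "(True,k,j) \<in> UNIV \<times> {1..K} \<times> {j}" "(False,k,j) \<in> UNIV \<times> {1..K} \<times> {j}"
      using that by auto
    note [measurable] = this[THEN measurable_component_PiM_borel]
    show ?thesis by measurable
  qed
  then show "(\<lambda>h. c * (\<Sum>k\<in>{1..K}. cmod (h (True,k,j)) * cmod (h (False,k,j))))
      \<in> borel_measurable (PiM (UNIV \<times> {1..K} \<times> {j}) (\<lambda>_. borel))"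
    by (intro borel_measurable_times borel_measurable_const borel_measurable_sum) auto
qed (auto simp: gain_def intro!: sum.cong)

lemma cdf_gain_asymp_equiv:
  assumes "j \<in> {1..N}"
  shows "cdf_of M (gain j) \<sim>[at_right 0] (\<lambda>u. zeta1 K ms ml * u powr (2 * ms * real K))"
proof -
  have ms: "ms > 0" "ms < ml" using m by auto
  have "2*ms+1 > 0" using ms(1) by linarith
  then have "Gamma (2*ms+1) > 0" by (rule Gamma_real_pos)
  then have const: "phi_const ms ml / Gamma (2*ms+1) * Gamma (2*ms+1) = phi_const ms ml" by simp
  have "cdf_sandwich M (\<lambda>\<omega>. \<Sum>k\<in>{1..K}. cmod (G k j \<omega>) * cmod (g k j \<omega>))
      ((phi_const ms ml / Gamma (2*ms+1) * Gamma (2*ms+1)) ^ K / Gamma (2*ms * real K + 1))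
      (2 * ms * real K) (min 2 (ml - ms))"
    by (rule cdf_sandwich_sum[OF K indep_vars_factor_products[OF assms]])
      (use m ms cdf_sandwich_factor_product[OF _ assms] in auto)
  then have "cdf_sandwich M (gain j) (phi_const ms ml ^ K / Gamma (2*ms * real K + 1)) (2 * ms * real K) (min 2 (ml - ms))"
    unfolding gain_def[abs_def] const .
  then show ?thesis
    unfolding zeta1_eq[OF ms(1) K, symmetric]
    by (rule asymp_equiv_of_cdf_sandwich) (use zeta1_pos[OF ms K] ms in auto)
qed

lemma cdf_ord_stat_scaled_gain_asymp_equiv:
  assumes c: "c > 0" and n: "1 \<le> n" "n \<le> N"
  shows "cdf_of M (ord_stat N (\<lambda>j \<omega>. c * gain j \<omega>) n) \<sim>[at_right 0]
      asym_cdf N n K ms (zeta1 K ms ml / c powr (2 * ms * real K))"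
proof (rule cdf_ord_stat_asymp_equiv[OF indep_vars_scaled_gains n])
  have ms: "ms > 0" "ms < ml" using m by auto
  then show "2 * ms * real K > 0" using K by simp
  show "zeta1 K ms ml / c powr (2 * ms * real K) > 0"
    using zeta1_pos[OF ms K] c by simp
  fix j assume "j \<in> {1..N}"
  moreover have "cdf_of M (\<lambda>\<omega>. c * gain j \<omega>) = (\<lambda>y. cdf_of M (gain j) (y / c))"
    using c by (auto simp: cdf_of_def field_simps intro!: arg_cong[where f="measure M"])
  ultimately show "cdf_of M (\<lambda>\<omega>. c * gain j \<omega>) \<sim>[at_right 0]
      (\<lambda>y. zeta1 K ms ml / c powr (2 * ms * real K) * y powr (2 * ms * real K))"
    using asymp_equiv_powr_compose_divide[OF cdf_gain_asymp_equiv c] by simp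
qed

lemma L_low_eq_scaled_gain: "L_low K b \<beta> G g = (\<lambda>j \<omega>. (\<beta> * cos (pi / 2 ^ b)) * gain j \<omega>)"
  by (simp add: fun_eq_iff L_low_def gain_def mult.assoc)

lemma Y_cont_eq_scaled_gain: "Y_cont K \<beta> G g = (\<lambda>j \<omega>. \<beta> * gain j \<omega>)"
  by (simp add: fun_eq_iff Y_cont_def gain_def)

end

theorem lemma2:
  fixes M :: "'a measure" and N K b n :: nat and \<beta> mG mg :: real
    and G g :: "nat \<Rightarrow> nat \<Rightarrow> 'a \<Rightarrow> complex" and th :: "nat \<Rightarrow> real"
  assumes "prob_space M"
    and "N \<ge> 1" and "K \<ge> 1" and "b \<ge> 2" and "0 < \<beta>" and "\<beta> \<le> 1"
    and "mG \<ge> 1/2" and "mg \<ge> 1/2" and "mG \<noteq> mg"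
    and "prob_space.indep_vars M (\<lambda>_. borel) (\<lambda>(c, k, j). if c then G k j else g k j) ((UNIV :: bool set) \<times> {1..K} \<times> {1..N})"
    and "\<forall>k\<in>{1..K}. \<forall>j\<in>{1..N}. distributed M lborel (\<lambda>\<omega>. cmod (G k j \<omega>)) (\<lambda>x. ennreal (nakagami_pdf mG x))"
    and "\<forall>k\<in>{1..K}. \<forall>j\<in>{1..N}. distributed M lborel (\<lambda>\<omega>. cmod (g k j \<omega>)) (\<lambda>x. ennreal (nakagami_pdf mg x))"
    and "\<forall>j\<in>{1..N}. 0 \<le> th j \<and> th j < 2 * pi"
    and "n \<in> {1..N}"
  shows "(AE \<omega> in M. ord_stat N (Y_disc K b \<beta> th G g) n \<omega> \<ge> ord_stat N (L_low K b \<beta> G g) n \<omega>)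
    \<and> (\<forall>y\<ge>0. cdf_of M (ord_stat N (Y_disc K b \<beta> th G g) n) y \<le> cdf_of M (ord_stat N (L_low K b \<beta> G g) n) y)
    \<and> (cdf_of M (ord_stat N (L_low K b \<beta> G g) n) \<sim>[at_right 0]
        asym_cdf N n K (min mG mg)
          (zeta1 K (min mG mg) (max mG mg) / (\<beta> * cos (pi / 2 ^ b)) powr (2 * min mG mg * real K)))
    \<and> (cdf_of M (ord_stat N (Y_cont K \<beta> G g) n) \<sim>[at_right 0]
        asym_cdf N n K (min mG mg)
          (zeta1 K (min mG mg) (max mG mg) / \<beta> powr (2 * min mG mg * real K)))"
proof -
  interpret nakagami_cascade M N K mG mg G g
  proof (intro nakagami_cascade.intro nakagami_cascade_axioms.intro)
    show "distributed M lborel (\<lambda>\<omega>. cmod (G k j \<omega>)) (\<lambda>x. ennreal (nakagami_pdf mG x))"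
      and "distributed M lborel (\<lambda>\<omega>. cmod (g k j \<omega>)) (\<lambda>x. ennreal (nakagami_pdf mg x))"
      if "k \<in> {1..K}" "j \<in> {1..N}" for k j
      using assms(11,12) that by blast+
  qed (use assms in simp_all)
  have n: "1 \<le> n" "n \<le> N" using assms(14) by auto
  have c: "\<beta> * cos (pi / 2 ^ b) > 0" using assms(4,5) cos_quant_pos by simp
  have le: "L_low K b \<beta> G g j \<omega> \<le> Y_disc K b \<beta> th G g j \<omega>" for j \<omega>
    using assms(5) by (intro L_low_le_Y_disc) simp
  show ?thesis
  proof (intro conjI allI impI AE_I2)
    show "ord_stat N (L_low K b \<beta> G g) n \<omega> \<le> ord_stat N (Y_disc K b \<beta> th G g) n \<omega>" for \<omega>
      using le n by (intro ord_stat_mono)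
    show "cdf_of M (ord_stat N (Y_disc K b \<beta> th G g) n) y \<le> cdf_of M (ord_stat N (L_low K b \<beta> G g) n) y" for y
      using le n measurable_gain by (intro cdf_ord_stat_le_of_le) (auto simp: L_low_eq_scaled_gain)
    show "cdf_of M (ord_stat N (L_low K b \<beta> G g) n) \<sim>[at_right 0]
        asym_cdf N n K (min mG mg) (zeta1 K (min mG mg) (max mG mg) / (\<beta> * cos (pi / 2 ^ b)) powr (2 * min mG mg * real K))"
      unfolding L_low_eq_scaled_gain by (rule cdf_ord_stat_scaled_gain_asymp_equiv[OF c n])
    show "cdf_of M (ord_stat N (Y_cont K \<beta> G g) n) \<sim>[at_right 0]
        asym_cdf N n K (min mG mg) (zeta1 K (min mG mg) (max mG mg) / \<beta> powr (2 * min mG mg * real K))"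
      unfolding Y_cont_eq_scaled_gain by (rule cdf_ord_stat_scaled_gain_asymp_equiv[OF assms(5) n])
  qed
qed

end
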